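(* Let $n\ge 2$ and let $F$ be any distribution of private values with support contained in $[\underline v,\overline v]$, $0\le\underline v\le\overline v<\infty$ (the lowest and highest points of $\text{supp}(F)$). Then there exist beliefs $(l^\star,\mu^\star,u^\star)$, held by every bidder, such that, with every bidder using the minimax-loss bidding function $\beta^{\text{IND}}(\cdot|l^\star,\mu^\star,u^\star)$ for the individual belief set $\mathcal B_i(l^\star,\mu^\star,u^\star)$, the tuple $(\beta^{\text{IND}},l^\star,\mu^\star,u^\star)$ is a moment equilibrium, and $v\mapsto\beta^{\text{IND}}(v|l^\star,\mu^\star,u^\star)$ is strictly increasing in $v$.
   Context: First-price sealed-bid auction for a single good with a set $N$ of $n\ge2$ risk-neutral bidders; values i.i.d. from $F$; highest bid wins and pays its bid; ties broken uniformly at random; payoff $v_i-b_i$ upon winning (shared equally among tying winners), $0$ otherwise; strategies are measurable maps $\beta_i:\text{supp}(F)\to\mathbb R_+$. For opponents' joint bid distribution $B_{-i}$, $U_i(b,B_{-i})$ is the expected payoff and $\lambda_i(b,B_{-i}|v_i)=\sup_{\tilde b\in\mathbb R_+}U_i(\tilde b,B_{-i})-U_i(b,B_{-i})$ is the loss. Individual belief set: $\mathcal B_{ij}(l,\mu,u)=\{B\text{ on }\mathbb R_+:\int_l^udB=1,\int x\,dB(x)=\mu\}$ and $\mathcal B_i(l,\mu,u)$ is the set of product distributions $\prod_{j\ne i}B_j$ with $B_j\in\mathcal B_{ij}(l,\mu,u)$. A minimax-loss bid for value $v_i$ is any element of $\arg\inf_{b\in\mathbb R_+}\sup_{B_{-i}\in\mathcal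 B_i(l,\mu,u)}\lambda_i(b,B_{-i}|v_i)$, denoted $\beta^{\text{IND}}(v_i|l,\mu,u)$. Moment equilibrium: a tuple $(\beta,l,\mu,u)$ with $\beta=(\beta_i)_{i\in N}$ and per-player beliefs $(l_i,\mu_i,u_i)$ such that (1) for each $i$ and $v_i\in\text{supp}(F)$, $\beta_i(v_i|l_i,\mu_i,u_i)$ is a minimax-loss bid for $\mathcal B_i(l_i,\mu_i,u_i)$; (2) $\int\beta_i(v|l_i,\mu_i,u_i)\,dF(v)=\mu_j$ for all $i$ and $j\ne i$; (3) for all $i$ and $j\ne i$, $\inf_{v\in\text{supp}(F)}\beta_i(v|l_i,\mu_i,u_i)=l_j$ and $\sup_{v\in\text{supp}(F)}\beta_i(v|l_i,\mu_i,u_i)=u_j$. *)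

theory Defs
  imports "HOL-Probability.Probability"
begin

definition supp :: "real measure \<Rightarrow> real set" where
  "supp F = {x. \<forall>e>0. 0 < measure F {x - e <..< x + e}}"

text \<open>Ex-post payoff of a bidder with value v bidding b against the opponents' bid
  profile x (indexed by the opponent set J): the highest bid wins, ties are broken
  uniformly at random (so the payoff is shared equally among tying winners).\<close>
definition payoff :: "nat set \<Rightarrow> real \<Rightarrow> real \<Rightarrow> (nat \<Rightarrow> real) \<Rightarrow> real" where
  "payoff J v b x =
     (if (\<forall>j\<in>J. x j \<le> b) then (v - b) / real (1 + card {j\<in>J. x j = b}) else 0)"

definition exp_payoff :: "nat set \<Rightarrow> (nat \<Rightarrow> real measure) \<Rightarrow> real \<Rightarrow> real \<Rightarrow> real" where
  "exp_payoff J B v b = (\<integral>x. payoff J v b x \<partial>(PiM J B))"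

definition loss :: "nat set \<Rightarrow> (nat \<Rightarrow> real measure) \<Rightarrow> real \<Rightarrow> real \<Rightarrow> ereal" where
  "loss J B v b = (SUP b'\<in>{0..}. ereal (exp_payoff J B v b')) - ereal (exp_payoff J B v b)"

definition indiv_beliefs :: "real \<Rightarrow> real \<Rightarrow> real \<Rightarrow> real measure set" where
  "indiv_beliefs l \<mu> u = {B. prob_space B \<and> sets B = sets borel \<and>
       measure B {0..} = 1 \<and> measure B {l..u} = 1 \<and>
       integrable B (\<lambda>x. x) \<and> (\<integral>x. x \<partial>B) = \<mu>}"

definition belief_set :: "nat set \<Rightarrow> real \<Rightarrow> real \<Rightarrow> real \<Rightarrow> (nat \<Rightarrow> real measure) set" where
  "belief_set J l \<mu> u = {B. \<forall>j\<in>J. B j \<in> indiv_beliefs l \<mu> u}"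

definition max_loss :: "nat set \<Rightarrow> real \<Rightarrow> real \<Rightarrow> real \<Rightarrow> real \<Rightarrow> real \<Rightarrow> ereal" where
  "max_loss J l \<mu> u v b = (SUP B\<in>belief_set J l \<mu> u. loss J B v b)"

definition minimax_loss_bid :: "nat set \<Rightarrow> real \<Rightarrow> real \<Rightarrow> real \<Rightarrow> real \<Rightarrow> real \<Rightarrow> bool" where
  "minimax_loss_bid J l \<mu> u v b \<longleftrightarrow>
     0 \<le> b \<and> (\<forall>b'\<ge>0. max_loss J l \<mu> u v b \<le> max_loss J l \<mu> u v b')"

definition moment_equilibrium ::
  "nat \<Rightarrow> real measure \<Rightarrow> (nat \<Rightarrow> real \<Rightarrow> real) \<Rightarrow> (nat \<Rightarrow> real) \<Rightarrow> (nat \<Rightarrow> real)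
     \<Rightarrow> (nat \<Rightarrow> real) \<Rightarrow> bool" where
  "moment_equilibrium n F \<beta> l \<mu> u \<longleftrightarrow>
     (\<forall>i<n. \<beta> i \<in> borel_measurable borel \<and> (\<forall>v\<in>supp F. 0 \<le> \<beta> i v)) \<and>
     (\<forall>i<n. \<forall>v\<in>supp F. minimax_loss_bid ({0..<n} - {i}) (l i) (\<mu> i) (u i) v (\<beta> i v)) \<and>
     (\<forall>i<n. \<forall>j<n. j \<noteq> i \<longrightarrow> integrable F (\<beta> i) \<and> (\<integral>v. \<beta> i v \<partial>F) = \<mu> j) \<and>
     (\<forall>i<n. \<forall>j<n. j \<noteq> i \<longrightarrow>
        Inf (\<beta> i ` supp F) = l j \<and> Sup (\<beta> i ` supp F) = u j)"

end

theory Submission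
  imports Defs
begin

(* Fix beliefs l < mu < u and m = n - 1 opponents.  Against a bid b the worst beliefs are
   two-point distributions, and the maximal loss of b is the larger of two regrets: the
   overbidding regret, sup over a <= min b mu of (b - a) ((u - mu)/(u - a))^m, which is strictly
   increasing in b, and an underbidding regret, which is decreasing in b and strictly
   increasing in the value v.  The minimax-loss bid equalises the two, so it is strictly
   increasing in v; it equals l at v = l, and u is chosen so that it equals u at the top
   value V.  It remains to make mu consistent: mu |-> E_F[bid_mu] - mu is continuous (the
   bids depend continuously on mu; dominated convergence), negative for mu close to V since
   bids lie below values, and nonnegative for mu close to l since then values near V bid a
   fixed distance above l; the intermediate value theorem gives the fixed point.  If F is a
   point mass at l, everybody bids l. *)

definition win_share :: "nat set \<Rightarrow> real \<Rightarrow> (nat \<Rightarrow> real) \<Rightarrow> real" where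
  "win_share J b x = (if \<forall>j\<in>J. x j \<le> b then 1 / real (1 + card {j\<in>J. x j = b}) else 0)"

lemma payoff_eq_win_share: "payoff J v b x = (v - b) * win_share J b x"
  unfolding payoff_def win_share_def by simp

lemma win_share_nonneg: "0 \<le> win_share J b x"
  unfolding win_share_def by simp

lemma win_share_le_1: "win_share J b x \<le> 1"
  unfolding win_share_def by simp

lemma win_share_eq_1:
  assumes "\<forall>j\<in>J. x j < b"
  shows "win_share J b x = 1"
proof -
  have "{j\<in>J. x j = b} = {}" "\<forall>j\<in>J. x j \<le> b" using assms by force+
  then show ?thesis unfolding win_share_def by (simp only: if_True card.empty) simp
qed

lemma win_share_eq_0: "\<not> (\<forall>j\<in>J. x j \<le> b) \<Longrightarrow> win_share J b x = 0"
  unfolding win_share_def by auto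

lemma win_share_mono:
  assumes "b1 \<le> b2"
  shows "win_share J b1 x \<le> win_share J b2 x"
proof (cases "b1 < b2 \<and> (\<forall>j\<in>J. x j \<le> b1)")
  case True
  then have "win_share J b2 x = 1" by (intro win_share_eq_1) force
  then show ?thesis using win_share_le_1 by simp
next
  case False
  then have "b1 = b2 \<or> win_share J b1 x = 0" using assms win_share_eq_0[of J x b1] by fastforce
  then show ?thesis using win_share_nonneg by auto
qed

lemma win_share_sum_form:
  "finite J \<Longrightarrow> win_share J b x =
     (if \<forall>j\<in>J. x j \<le> b then 1 / (1 + (\<Sum>j\<in>J. if x j = b then 1 else 0)) else 0)"
  unfolding win_share_def by (simp add: sum.If_cases Int_def)

locale product_beliefs =
  fixes J :: "nat set" and B :: "nat \<Rightarrow> real measure"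
  assumes finite_opponents: "finite J"
    and prob_space_belief: "\<And>j. j \<in> J \<Longrightarrow> prob_space (B j)"
    and sets_belief: "\<And>j. j \<in> J \<Longrightarrow> sets (B j) = sets borel"
begin

lemma prob_space_product: "prob_space (PiM J B)"
  by (rule prob_space_PiM) (rule prob_space_belief)

lemma space_belief: "j \<in> J \<Longrightarrow> space (B j) = UNIV"
  using sets_belief sets_eq_imp_space_eq by fastforce

lemma measurable_component: "j \<in> J \<Longrightarrow> (\<lambda>x. x j) \<in> borel_measurable (PiM J B)"
  using measurable_component_singleton[of j J B] sets_belief measurable_cong_sets by blast

lemma win_share_measurable: "win_share J b \<in> borel_measurable (PiM J B)"
proof -
  have eq: "win_share J b = (\<lambda>x. if \<forall>j\<in>J. x j \<le> b
      then 1 / (1 + (\<Sum>j\<in>J. if x j = b then 1 else 0)) else 0)"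
    using win_share_sum_form[OF finite_opponents] by (intro ext) simp
  show ?thesis unfolding eq using measurable_component finite_opponents by measurable
qed

lemma integrable_win_share: "integrable (PiM J B) (win_share J b)"
proof -
  interpret prob_space "PiM J B" by (rule prob_space_product)
  show ?thesis
    by (rule integrable_const_bound[where B=1])
       (auto simp: win_share_nonneg win_share_le_1 win_share_measurable)
qed

definition win_prob :: "real \<Rightarrow> real" where
  "win_prob b = (\<integral>x. win_share J b x \<partial>PiM J B)"

lemma exp_payoff_eq_win_prob: "exp_payoff J B v b = (v - b) * win_prob b"
  unfolding exp_payoff_def win_prob_def payoff_eq_win_share by simp

lemma win_prob_nonneg: "0 \<le> win_prob b"
  unfolding win_prob_def by (simp add: win_share_nonneg)

lemma win_prob_le_1: "win_prob b \<le> 1"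
proof -
  interpret prob_space "PiM J B" by (rule prob_space_product)
  have "win_prob b \<le> (\<integral>x. 1 \<partial>PiM J B)" unfolding win_prob_def
    by (rule integral_mono) (auto simp: integrable_win_share win_share_le_1)
  then show ?thesis by (simp add: prob_space)
qed

lemma win_prob_mono: "b1 \<le> b2 \<Longrightarrow> win_prob b1 \<le> win_prob b2"
  unfolding win_prob_def by (rule integral_mono) (auto simp: integrable_win_share win_share_mono)

lemma box_in_sets: "(\<And>j. j \<in> J \<Longrightarrow> A j \<in> sets borel) \<Longrightarrow> PiE J A \<in> sets (PiM J B)"
  by (rule sets_PiM_I_finite) (auto simp: finite_opponents sets_belief)

lemma measure_box:
  assumes A: "\<And>j. j \<in> J \<Longrightarrow> A j \<in> sets borel"
  shows "measure (PiM J B) (PiE J A) = (\<Prod>j\<in>J. measure (B j) (A j))"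
proof -
  \<comment> \<open>extend the family outside J, as the library's product locale needs all factors\<close>
  let ?M = "\<lambda>i. if i \<in> J then B i else count_space {undefined}"
  interpret M': prob_space "?M i" for i
    using prob_space_belief by (cases "i \<in> J") (auto intro!: prob_spaceI)
  interpret finite_product_prob_space ?M J
    by unfold_locales (rule finite_opponents)
  have "(\<Pi>\<^sub>M i\<in>J. ?M i) = (\<Pi>\<^sub>M i\<in>J. B i)"
    by (intro PiM_cong) auto
  moreover have "measure (\<Pi>\<^sub>M i\<in>J. ?M i) (PiE J A) = (\<Prod>j\<in>J. measure (?M j) (A j))"
    by (rule finite_measure_PiM_emb) (use A sets_belief in auto)
  ultimately show ?thesis by simp
qed

lemma integral_indicator_box:
  assumes "\<And>j. j \<in> J \<Longrightarrow> A j \<in> sets borel"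
  shows "integrable (PiM J B) (indicator (PiE J A) :: _ \<Rightarrow> real)"
    and "(\<integral>x. indicator (PiE J A) x \<partial>PiM J B) = (\<Prod>j\<in>J. measure (B j) (A j))"
proof -
  interpret prob_space "PiM J B" by (rule prob_space_product)
  show "integrable (PiM J B) (indicator (PiE J A) :: _ \<Rightarrow> real)"
    using box_in_sets[OF assms] by (simp add: emeasure_eq_measure)
  show "(\<integral>x. indicator (PiE J A) x \<partial>PiM J B) = (\<Prod>j\<in>J. measure (B j) (A j))"
    using box_in_sets[OF assms] measure_box[OF assms] by simp
qed

lemma win_prob_le_prod_cdf: "win_prob b \<le> (\<Prod>j\<in>J. measure (B j) {..b})"
proof -
  have "win_prob b \<le> (\<integral>x. indicator (PiE J (\<lambda>_. {..b})) x \<partial>PiM J B)"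
    unfolding win_prob_def
  proof (rule integral_mono)
    fix x assume "x \<in> space (PiM J B)"
    then show "win_share J b x \<le> indicator (PiE J (\<lambda>_. {..b})) x"
      by (auto simp: win_share_def indicator_def PiE_def extensional_def space_PiM space_belief)
  qed (auto simp: integrable_win_share integral_indicator_box)
  also have "\<dots> = (\<Prod>j\<in>J. measure (B j) {..b})" by (rule integral_indicator_box) simp
  finally show ?thesis .
qed

lemma prod_cdf_less_le_win_prob: "(\<Prod>j\<in>J. measure (B j) {..<b}) \<le> win_prob b"
proof -
  have "(\<Prod>j\<in>J. measure (B j) {..<b}) = (\<integral>x. indicator (PiE J (\<lambda>_. {..<b})) x \<partial>PiM J B)"
    by (rule integral_indicator_box(2)[symmetric]) simp
  also have "\<dots> \<le> win_prob b"
    unfolding win_prob_def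
  proof (rule integral_mono)
    fix x assume "x \<in> space (PiM J B)"
    then show "indicator (PiE J (\<lambda>_. {..<b})) x \<le> win_share J b x"
      using win_share_eq_1[of J x b] win_share_nonneg[of J b x]
      by (cases "x \<in> PiE J (\<lambda>_. {..<b})") (auto simp: PiE_iff)
  qed (auto simp: integrable_win_share integral_indicator_box)
  finally show ?thesis .
qed

lemma win_prob_eq_power:
  assumes "\<And>j. j \<in> J \<Longrightarrow> measure (B j) {..b} = r \<and> measure (B j) {..<b} = r"
  shows "win_prob b = r ^ card J"
  using win_prob_le_prod_cdf[of b] prod_cdf_less_le_win_prob[of b] assms by simp

end

definition two_point :: "real \<Rightarrow> real \<Rightarrow> real \<Rightarrow> real measure" where
  "two_point lo hi q = distr (measure_pmf (bernoulli_pmf q)) borel (\<lambda>c. if c then lo else hi)"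

lemma sets_two_point [simp]: "sets (two_point lo hi q) = sets borel"
  unfolding two_point_def by simp

lemma prob_space_two_point: "prob_space (two_point lo hi q)"
  unfolding two_point_def
  by (rule prob_space.prob_space_distr) (auto simp: measure_pmf.prob_space_axioms)

lemma measure_two_point:
  assumes "0 \<le> q" "q \<le> 1" "A \<in> sets borel"
  shows "measure (two_point lo hi q) A = q * indicator A lo + (1 - q) * indicator A hi"
proof -
  have "measure (two_point lo hi q) A
      = (\<integral>c. indicator ((\<lambda>c. if c then lo else hi) -` A) c \<partial>measure_pmf (bernoulli_pmf q))"
    unfolding two_point_def using assms by (subst measure_distr) auto
  also have "\<dots> = q * indicator A lo + (1 - q) * indicator A hi"
    using assms by (subst integral_bernoulli_pmf) (auto simp: indicator_def)
  finally show ?thesis .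
qed

lemma two_point_mean:
  assumes "0 \<le> q" "q \<le> 1"
  shows "integrable (two_point lo hi q) (\<lambda>x. x)"
    and "(\<integral>x. x \<partial>two_point lo hi q) = q * lo + (1 - q) * hi"
  unfolding two_point_def using assms
  by (subst integrable_distr_eq integral_distr; auto intro!: integrable_measure_pmf_finite)+

text \<open>Markov's inequality bounds P(X \<le> a) by this quantity for every X \<le> u with mean \<mu>; the
  two-point law on {a, u} with mean \<mu> attains it.\<close>

definition markov_bound :: "real \<Rightarrow> real \<Rightarrow> real \<Rightarrow> real" where
  "markov_bound \<mu> u a = (u - \<mu>) / (u - a)"

lemma two_point_in_belief_set:
  assumes "0 \<le> l" "l \<le> lo" "lo \<le> \<mu>" "\<mu> \<le> hi" "hi \<le> u" "lo < hi"
  shows "(\<lambda>_. two_point lo hi (markov_bound \<mu> hi lo)) \<in> belief_set J l \<mu> u"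
proof -
  let ?q = "markov_bound \<mu> hi lo"
  have q: "0 \<le> ?q" "?q \<le> 1" using assms unfolding markov_bound_def by auto
  have "?q * lo + (1 - ?q) * hi = hi - ?q * (hi - lo)" by (simp add: algebra_simps)
  also have "\<dots> = \<mu>" using assms unfolding markov_bound_def by simp
  finally have "?q * lo + (1 - ?q) * hi = \<mu>" .
  then show ?thesis
    unfolding belief_set_def indiv_beliefs_def using assms q
    by (auto simp: prob_space_two_point measure_two_point two_point_mean)
qed

lemma point_mass_in_belief_set:
  "0 \<le> l \<Longrightarrow> l \<le> \<mu> \<Longrightarrow> \<mu> \<le> u \<Longrightarrow> (\<lambda>_. two_point \<mu> \<mu> 1) \<in> belief_set J l \<mu> u"
  unfolding belief_set_def indiv_beliefs_def
  by (auto simp: prob_space_two_point measure_two_point two_point_mean)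

lemma belief_set_product_beliefs:
  "finite J \<Longrightarrow> B \<in> belief_set J l \<mu> u \<Longrightarrow> product_beliefs J B"
  unfolding belief_set_def indiv_beliefs_def product_beliefs_def by blast

context
  fixes B l \<mu> u
  assumes belief: "B \<in> indiv_beliefs l \<mu> u"
begin

interpretation prob_space B
  using belief unfolding indiv_beliefs_def by auto

lemma indiv_belief_AE_bounds: "AE x in B. l \<le> x \<and> x \<le> u"
proof -
  have "prob {l..u} = 1" using belief unfolding indiv_beliefs_def by auto
  then have "AE x in B. x \<in> {l..u}" by (rule AE_prob_1)
  then show ?thesis by auto
qed

lemma indiv_belief_sets [measurable]: "A \<in> sets borel \<Longrightarrow> A \<in> events"
  using belief unfolding indiv_beliefs_def by auto

lemma indiv_belief_space: "space B = UNIV"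
  using belief sets_eq_imp_space_eq[of B borel] unfolding indiv_beliefs_def by auto

lemma indiv_belief_mean: "integrable B (\<lambda>x. x)" "expectation (\<lambda>x. x) = \<mu>"
  using belief unfolding indiv_beliefs_def by auto

lemma cdf_le_markov_bound:
  assumes "a < u"
  shows "measure B {..a} \<le> markov_bound \<mu> u a"
proof -
  have "(u - a) * measure B {..a} = expectation (\<lambda>x. (u - a) * indicator {..a} x)"
    by simp
  also have "\<dots> \<le> expectation (\<lambda>x. u - x)"
  proof (rule integral_mono_AE)
    show "AE x in B. (u - a) * indicator {..a} x \<le> u - x"
      using indiv_belief_AE_bounds by eventually_elim (use assms in \<open>auto simp: indicator_def\<close>)
  qed (use indiv_belief_mean in \<open>auto simp: emeasure_eq_measure\<close>)
  also have "\<dots> = u - \<mu>" using indiv_belief_mean by (simp add: prob_space)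
  finally show ?thesis using assms unfolding markov_bound_def by (simp add: field_simps)
qed

lemma cdf_less_ge_markov:
  assumes "l < b"
  shows "(b - \<mu>) / (b - l) \<le> measure B {..<b}"
proof -
  have "(b - l) * measure B {b..} = expectation (\<lambda>x. (b - l) * indicator {b..} x)"
    by simp
  also have "\<dots> \<le> expectation (\<lambda>x. x - l)"
  proof (rule integral_mono_AE)
    show "AE x in B. (b - l) * indicator {b..} x \<le> x - l"
      using indiv_belief_AE_bounds by eventually_elim (use assms in \<open>auto simp: indicator_def\<close>)
  qed (use indiv_belief_mean in \<open>auto simp: emeasure_eq_measure\<close>)
  also have "\<dots> = \<mu> - l" using indiv_belief_mean by (simp add: prob_space)
  finally have "measure B {b..} \<le> (\<mu> - l) / (b - l)" using assms by (simp add: field_simps)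
  moreover have "measure B {..<b} = 1 - measure B {b..}"
    using prob_compl[of "{b..}"]
    by (simp add: Compl_eq_Diff_UNIV[symmetric] Compl_atLeast indiv_belief_space)
  moreover have "(b - \<mu>) / (b - l) = 1 - (\<mu> - l) / (b - l)"
    using assms by (simp add: field_simps)
  ultimately show ?thesis by linarith
qed

lemma cdf_below_lower_bound:
  assumes "a < l"
  shows "measure B {..a} = 0"
proof -
  have "AE x in B. x \<notin> {..a}" using indiv_belief_AE_bounds by eventually_elim (use assms in auto)
  then have "emeasure B {..a} = 0"
    by (subst AE_iff_measurable[symmetric]) (auto simp: indiv_belief_space)
  then show ?thesis by (simp add: emeasure_eq_measure)
qed

end

locale moment_beliefs = product_beliefs +
  fixes l \<mu> u :: real
  assumes in_belief_set: "B \<in> belief_set J l \<mu> u"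
begin

lemma indiv_belief: "j \<in> J \<Longrightarrow> B j \<in> indiv_beliefs l \<mu> u"
  using in_belief_set unfolding belief_set_def by auto

lemma win_prob_le_markov_bound:
  assumes "t < u"
  shows "win_prob t \<le> markov_bound \<mu> u t ^ card J"
proof -
  have "win_prob t \<le> (\<Prod>j\<in>J. measure (B j) {..t})" by (rule win_prob_le_prod_cdf)
  also have "\<dots> \<le> (\<Prod>j\<in>J. markov_bound \<mu> u t)"
    using assms cdf_le_markov_bound[OF indiv_belief] by (intro prod_mono) auto
  finally show ?thesis by simp
qed

lemma win_prob_below_lower_bound:
  assumes "J \<noteq> {}" "t < l"
  shows "win_prob t = 0"
proof -
  have "(\<Prod>j\<in>J. measure (B j) {..t}) = 0"
    using assms finite_opponents cdf_below_lower_bound[OF indiv_belief] by (intro prod_zero) auto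
  then show ?thesis using win_prob_le_prod_cdf[of t] win_prob_nonneg[of t] by simp
qed

lemma win_prob_ge:
  assumes "l < b" "\<mu> \<le> b"
  shows "((b - \<mu>) / (b - l)) ^ card J \<le> win_prob b"
proof -
  have "((b - \<mu>) / (b - l)) ^ card J = (\<Prod>j\<in>J. (b - \<mu>) / (b - l))" by simp
  also have "\<dots> \<le> (\<Prod>j\<in>J. measure (B j) {..<b})"
    using assms cdf_less_ge_markov[OF indiv_belief] by (intro prod_mono) auto
  also have "\<dots> \<le> win_prob b" by (rule prod_cdf_less_le_win_prob)
  finally show ?thesis .
qed

lemma gain_from_lower_bid_le:
  assumes "J \<noteq> {}" "l < \<mu>" "\<mu> < u" "b' < b" "b \<le> v" "0 \<le> R"
    and over: "\<And>a. l \<le> a \<Longrightarrow> a \<le> b \<Longrightarrow> a \<le> \<mu> \<Longrightarrow> (b - a) * markov_bound \<mu> u a ^ card J \<le> R"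
  shows "exp_payoff J B v b' \<le> exp_payoff J B v b + R"
proof -
  have "(v - b) * win_prob b' \<le> (v - b) * win_prob b"
    using win_prob_mono assms by (intro mult_left_mono) auto
  then have "exp_payoff J B v b' - exp_payoff J B v b \<le> (b - b') * win_prob b'"
    unfolding exp_payoff_eq_win_prob by (simp add: algebra_simps)
  also have "\<dots> \<le> R"
  proof (cases "b' < l")
    case True
    then show ?thesis using win_prob_below_lower_bound assms by simp
  next
    case not_below: False
    show ?thesis
    proof (cases "b' < \<mu>")
      case True
      have "(b - b') * win_prob b' \<le> (b - b') * markov_bound \<mu> u b' ^ card J"
        using win_prob_le_markov_bound[of b'] True assms by (intro mult_left_mono) auto
      also have "\<dots> \<le> R" using over[of b'] not_below True assms by simp
      finally show ?thesis .
    next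
      case False
      have "(b - b') * win_prob b' \<le> b - \<mu>"
        using win_prob_le_1[of b'] win_prob_nonneg[of b'] False assms by (smt (verit) mult_left_le)
      also have "\<dots> \<le> R" using over[of \<mu>] not_below False assms by (simp add: markov_bound_def)
      finally show ?thesis .
    qed
  qed
  finally show ?thesis by simp
qed

lemma gain_from_higher_bid_le:
  assumes "l < \<mu>" "\<mu> < u" "b \<le> b'" "b \<le> v" "0 \<le> R"
    and high: "\<mu> \<le> b \<Longrightarrow> (v - b) * (1 - ((b - \<mu>) / (b - l)) ^ card J) \<le> R"
    and low: "\<And>x. b < \<mu> \<Longrightarrow> b \<le> x \<Longrightarrow> x \<le> \<mu> \<Longrightarrow> (v - x) * markov_bound \<mu> u x ^ card J \<le> R"
  shows "exp_payoff J B v b' \<le> exp_payoff J B v b + R"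
proof -
  have payoff_nonneg: "0 \<le> exp_payoff J B v b"
    unfolding exp_payoff_eq_win_prob using assms win_prob_nonneg by simp
  have payoff_le: "exp_payoff J B v b' \<le> max 0 (v - b')"
    unfolding exp_payoff_eq_win_prob using win_prob_le_1[of b'] win_prob_nonneg[of b']
    by (smt (verit) mult_left_le mult_nonpos_nonneg)
  show ?thesis
  proof (cases "\<mu> \<le> b")
    case True
    have "(v - b) * ((b - \<mu>) / (b - l)) ^ card J \<le> exp_payoff J B v b"
      unfolding exp_payoff_eq_win_prob using win_prob_ge[of b] True assms
      by (intro mult_left_mono) auto
    then show ?thesis using payoff_le high True assms by (simp add: algebra_simps)
  next
    case False
    have "exp_payoff J B v b' \<le> R"
    proof (cases "v \<le> b'")
      case True
      then show ?thesis using payoff_le assms by simp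
    next
      case below_value: False
      show ?thesis
      proof (cases "b' < \<mu>")
        case True
        have "exp_payoff J B v b' \<le> (v - b') * markov_bound \<mu> u b' ^ card J"
          unfolding exp_payoff_eq_win_prob using win_prob_le_markov_bound[of b'] True below_value assms
          by (intro mult_left_mono) auto
        also have "\<dots> \<le> R" using low[of b'] False True assms by simp
        finally show ?thesis .
      next
        case not_below_mean: False
        have "exp_payoff J B v b' \<le> v - \<mu>" using payoff_le not_below_mean below_value by simp
        also have "\<dots> \<le> R" using low[of \<mu>] False assms by (simp add: markov_bound_def)
        finally show ?thesis .
      qed
    qed
    then show ?thesis using payoff_nonneg by simp
  qed
qed

end

lemma moment_beliefsI: "finite J \<Longrightarrow> B \<in> belief_set J l \<mu> u \<Longrightarrow> moment_beliefs J B l \<mu> u"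
  using belief_set_product_beliefs by (simp add: moment_beliefs_def moment_beliefs_axioms_def)

lemma loss_leI:
  assumes "\<And>b'. 0 \<le> b' \<Longrightarrow> exp_payoff J B v b' \<le> exp_payoff J B v b + R"
  shows "loss J B v b \<le> ereal R"
proof -
  have "(SUP b'\<in>{0..}. ereal (exp_payoff J B v b')) \<le> ereal (exp_payoff J B v b + R)"
    by (rule SUP_least) (use assms in auto)
  then show ?thesis unfolding loss_def by (simp add: ereal_minus_le_iff algebra_simps)
qed

lemma payoff_gain_le_max_loss:
  assumes "B \<in> belief_set J l \<mu> u" "0 \<le> b'"
  shows "ereal (exp_payoff J B v b' - exp_payoff J B v b) \<le> max_loss J l \<mu> u v b"
proof -
  have "ereal (exp_payoff J B v b') \<le> (SUP b'\<in>{0..}. ereal (exp_payoff J B v b'))"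
    by (rule SUP_upper) (use assms in auto)
  then have "ereal (exp_payoff J B v b' - exp_payoff J B v b) \<le> loss J B v b"
    unfolding loss_def by (simp add: ereal_le_minus_iff algebra_simps)
  also have "\<dots> \<le> max_loss J l \<mu> u v b"
    unfolding max_loss_def by (rule SUP_upper) (rule assms)
  finally show ?thesis .
qed

lemma loss_le_regret_bound:
  assumes "finite J" "J \<noteq> {}" "B \<in> belief_set J l \<mu> u"
    and "l < \<mu>" "\<mu> < u" "b \<le> v" "0 \<le> R"
    and "\<And>a. l \<le> a \<Longrightarrow> a \<le> b \<Longrightarrow> a \<le> \<mu> \<Longrightarrow> (b - a) * markov_bound \<mu> u a ^ card J \<le> R"
    and "\<mu> \<le> b \<Longrightarrow> (v - b) * (1 - ((b - \<mu>) / (b - l)) ^ card J) \<le> R"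
    and "\<And>x. b < \<mu> \<Longrightarrow> b \<le> x \<Longrightarrow> x \<le> \<mu> \<Longrightarrow> (v - x) * markov_bound \<mu> u x ^ card J \<le> R"
  shows "loss J B v b \<le> ereal R"
proof (rule loss_leI)
  interpret moment_beliefs J B l \<mu> u by (rule moment_beliefsI) (use assms in auto)
  fix b' :: real
  show "exp_payoff J B v b' \<le> exp_payoff J B v b + R"
  proof (cases "b' < b")
    case True
    then show ?thesis by (intro gain_from_lower_bid_le) (use assms in auto)
  next
    case False
    then show ?thesis by (intro gain_from_higher_bid_le) (use assms in auto)
  qed
qed

lemma max_loss_ge_overbid_gain:
  assumes "finite J" "0 \<le> l" "l \<le> a" "a \<le> \<mu>" "\<mu> < u" "a < b'" "b' < b" "b < u \<or> a = \<mu>"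
  shows "ereal ((b - b') * markov_bound \<mu> u a ^ card J) \<le> max_loss J l \<mu> u v b"
proof -
  let ?q = "markov_bound \<mu> u a"
  let ?B = "\<lambda>_. two_point a u ?q"
  have B: "?B \<in> belief_set J l \<mu> u" by (rule two_point_in_belief_set) (use assms in auto)
  interpret product_beliefs J ?B by (rule belief_set_product_beliefs[OF assms(1) B])
  have q: "0 \<le> ?q" "?q \<le> 1" "a = \<mu> \<Longrightarrow> ?q = 1"
    using assms by (auto simp: markov_bound_def)
  have "win_prob t = ?q ^ card J" if "a < t" "t \<le> b" for t
    by (rule win_prob_eq_power) (use that assms q in \<open>auto simp: measure_two_point indicator_def\<close>)
  then have "(b - b') * ?q ^ card J = exp_payoff J ?B v b' - exp_payoff J ?B v b"
    using assms by (simp add: exp_payoff_eq_win_prob algebra_simps)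
  then show ?thesis using payoff_gain_le_max_loss[OF B, of b' v b] assms by simp
qed

lemma max_loss_ge_underbid_gain_high:
  assumes "finite J" "0 \<le> l" "l < \<mu>" "\<mu> \<le> b" "b < c" "c \<le> u" "c < b'"
  shows "ereal ((v - b') - (v - b) * ((c - \<mu>) / (c - l)) ^ card J) \<le> max_loss J l \<mu> u v b"
proof -
  let ?q = "markov_bound \<mu> c l"
  let ?B = "\<lambda>_. two_point l c ?q"
  have B: "?B \<in> belief_set J l \<mu> u" by (rule two_point_in_belief_set) (use assms in auto)
  interpret product_beliefs J ?B by (rule belief_set_product_beliefs[OF assms(1) B])
  have q: "0 \<le> ?q" "?q \<le> 1" using assms by (auto simp: markov_bound_def)
  have "win_prob b = ?q ^ card J"
    by (rule win_prob_eq_power) (use assms q in \<open>auto simp: measure_two_point indicator_def\<close>)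
  moreover have "win_prob b' = 1 ^ card J"
    by (rule win_prob_eq_power) (use assms q in \<open>auto simp: measure_two_point indicator_def\<close>)
  ultimately have "(v - b') - (v - b) * ?q ^ card J = exp_payoff J ?B v b' - exp_payoff J ?B v b"
    by (simp add: exp_payoff_eq_win_prob)
  then show ?thesis using payoff_gain_le_max_loss[OF B, of b' v b] assms
    by (simp add: markov_bound_def)
qed

lemma max_loss_ge_underbid_gain_low:
  assumes "finite J" "J \<noteq> {}" "0 \<le> l" "l \<le> c" "b < c" "c \<le> \<mu>" "\<mu> < u" "c < b'" "b' < u"
  shows "ereal ((v - b') * markov_bound \<mu> u c ^ card J) \<le> max_loss J l \<mu> u v b"
proof -
  let ?q = "markov_bound \<mu> u c"
  let ?B = "\<lambda>_. two_point c u ?q"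
  have B: "?B \<in> belief_set J l \<mu> u" by (rule two_point_in_belief_set) (use assms in auto)
  interpret product_beliefs J ?B by (rule belief_set_product_beliefs[OF assms(1) B])
  have q: "0 \<le> ?q" "?q \<le> 1" using assms by (auto simp: markov_bound_def)
  have "win_prob b = 0 ^ card J"
    by (rule win_prob_eq_power) (use assms q in \<open>auto simp: measure_two_point indicator_def\<close>)
  moreover have "win_prob b' = ?q ^ card J"
    by (rule win_prob_eq_power) (use assms q in \<open>auto simp: measure_two_point indicator_def\<close>)
  moreover have "card J \<noteq> 0" using assms(1,2) by simp
  ultimately have "(v - b') * ?q ^ card J = exp_payoff J ?B v b' - exp_payoff J ?B v b"
    by (simp add: exp_payoff_eq_win_prob)
  then show ?thesis using payoff_gain_le_max_loss[OF B, of b' v b] assms by simp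
qed

lemma max_loss_nonneg:
  assumes "0 \<le> l" "l \<le> \<mu>" "\<mu> \<le> u" "0 \<le> b"
  shows "0 \<le> max_loss J l \<mu> u v b"
  using payoff_gain_le_max_loss[OF point_mass_in_belief_set[OF assms(1-3)] assms(4), where v=v and b=b]
  by (simp add: zero_ereal_def)

lemma ereal_le_at_left_endpoint:
  fixes g :: "real \<Rightarrow> real"
  assumes "a < b" "continuous_on {a..b} g" "\<And>t. a < t \<Longrightarrow> t < b \<Longrightarrow> ereal (g t) \<le> X"
  shows "ereal (g a) \<le> X"
proof (rule tendsto_le[OF trivial_limit_at_right_real tendsto_const])
  show "((\<lambda>t. ereal (g t)) \<longlongrightarrow> ereal (g a)) (at_right a)"
    using assms(1,2) by (auto simp: continuous_on_def at_within_Icc_at_right[symmetric])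
  show "eventually (\<lambda>t. ereal (g t) \<le> X) (at_right a)"
    using eventually_at_right_real[OF assms(1)] by eventually_elim (use assms(3) in auto)
qed

lemma Sup_image_interval_ge:
  fixes f :: "real \<Rightarrow> real"
  assumes "lo \<le> x" "x \<le> hi" "continuous_on {lo..hi} f"
  shows "f x \<le> Sup (f ` {lo..hi})"
  using assms
  by (intro cSup_upper bounded_imp_bdd_above compact_imp_bounded compact_continuous_image) auto

lemma Sup_image_interval_le:
  fixes f :: "real \<Rightarrow> real"
  assumes "lo \<le> hi" "\<And>x. lo \<le> x \<Longrightarrow> x \<le> hi \<Longrightarrow> f x \<le> R"
  shows "Sup (f ` {lo..hi}) \<le> R"
  by (rule cSup_least) (use assms in auto)

lemma ereal_Sup_image_interval_le:
  fixes f :: "real \<Rightarrow> real"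
  assumes "lo \<le> hi" "\<And>x. lo \<le> x \<Longrightarrow> x \<le> hi \<Longrightarrow> ereal (f x) \<le> X"
  shows "ereal (Sup (f ` {lo..hi})) \<le> X"
proof (cases X)
  case (real r)
  then show ?thesis using assms by (simp add: Sup_image_interval_le)
next
  case MInf
  then show ?thesis using assms(2)[of lo] assms(1) by simp
qed simp

lemma continuous_on_Sup_unit_interval:
  fixes g :: "real \<times> 'a::metric_space \<Rightarrow> real"
  assumes P: "compact P" and g: "continuous_on ({0..1} \<times> P) g"
  shows "continuous_on P (\<lambda>p. Sup ((\<lambda>t. g (t, p)) ` {0..1}))"
  unfolding continuous_on_iff
proof (intro ballI allI impI)
  fix p e assume p: "p \<in> P" and e: "(0::real) < e"
  have Sup_le: "Sup ((\<lambda>t. g (t, p')) ` {0..1}) \<le> Sup ((\<lambda>t. g (t, p)) ` {0..1}) + e/2"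
    if "p \<in> P" "p' \<in> P" "\<And>t. t \<in> {0..1} \<Longrightarrow> dist (g (t, p')) (g (t, p)) < e/2" for p p'
  proof (rule Sup_image_interval_le)
    fix t :: real assume t: "0 \<le> t" "t \<le> 1"
    have "continuous_on {0..1} (\<lambda>t. g (t, p))"
      using that(1) by (intro continuous_on_compose2[OF g]) (auto intro!: continuous_intros)
    then have "g (t, p) \<le> Sup ((\<lambda>t. g (t, p)) ` {0..1})" using t by (rule Sup_image_interval_ge[rotated 2])
    moreover have "dist (g (t, p')) (g (t, p)) < e/2" using that(3) t by simp
    ultimately show "g (t, p') \<le> Sup ((\<lambda>t. g (t, p)) ` {0..1}) + e/2"
      unfolding dist_real_def abs_less_iff by linarith
  qed simp
  have "uniformly_continuous_on ({0..1} \<times> P) g"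
    using g P by (intro compact_uniformly_continuous) (auto simp: compact_Times)
  then obtain d where d: "0 < d"
    "\<And>z z'. z \<in> {0..1} \<times> P \<Longrightarrow> z' \<in> {0..1} \<times> P \<Longrightarrow> dist z' z < d \<Longrightarrow> dist (g z') (g z) < e/2"
    using e unfolding uniformly_continuous_on_def by (meson half_gt_zero)
  show "\<exists>d>0. \<forall>p'\<in>P. dist p' p < d \<longrightarrow>
      dist (Sup ((\<lambda>t. g (t, p')) ` {0..1})) (Sup ((\<lambda>t. g (t, p)) ` {0..1})) < e"
  proof (intro exI[of _ d] conjI ballI impI)
    fix p' assume p': "p' \<in> P" "dist p' p < d"
    have "dist (g (t, p')) (g (t, p)) < e/2" "dist (g (t, p)) (g (t, p')) < e/2" if "t \<in> {0..1}" for t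
      using d(2) that p p' by (auto simp: dist_Pair_Pair dist_commute)
    then show "dist (Sup ((\<lambda>t. g (t, p')) ` {0..1})) (Sup ((\<lambda>t. g (t, p)) ` {0..1})) < e"
      using Sup_le[OF p p'(1)] Sup_le[OF p'(1) p] e by (simp add: dist_real_def abs_less_iff)
  qed (rule d)
qed

lemma continuous_on_Sup_image_interval:
  fixes f :: "real \<Rightarrow> 'a::metric_space \<Rightarrow> real"
  assumes P: "compact P" and lo: "continuous_on P lo" and hi: "continuous_on P hi"
    and lo_le_hi: "\<And>p. p \<in> P \<Longrightarrow> lo p \<le> hi p"
    and f: "continuous_on {z. snd z \<in> P \<and> fst z \<in> {lo (snd z)..hi (snd z)}} (\<lambda>z. f (fst z) (snd z))"
  shows "continuous_on P (\<lambda>p. Sup ((\<lambda>x. f x p) ` {lo p..hi p}))"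
proof -
  \<comment> \<open>rescale the interval of each parameter to the unit interval\<close>
  define s where "s z = (lo (snd z) + fst z * (hi (snd z) - lo (snd z)), snd z)" for z :: "real \<times> 'a"
  have "(\<lambda>x. f x p) ` {lo p..hi p} = (\<lambda>t. f (fst (s (t, p))) p) ` {0..1}" if "p \<in> P" for p
  proof -
    have "{lo p..hi p} = (\<lambda>t. (hi p - lo p) * t + lo p) ` {0..1}"
      using lo_le_hi[OF that] by (simp add: image_affinity_atLeastAtMost)
    then show ?thesis unfolding s_def by (simp add: image_image algebra_simps)
  qed
  moreover have "continuous_on P (\<lambda>p. Sup ((\<lambda>t. f (fst (s (t, p))) (snd (t, p))) ` {0..1}))"
  proof (rule continuous_on_Sup_unit_interval[OF P, where g="\<lambda>z. f (fst (s z)) (snd z)"])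
    have "s z \<in> {z. snd z \<in> P \<and> fst z \<in> {lo (snd z)..hi (snd z)}}" if "z \<in> {0..1} \<times> P" for z
    proof -
      have "fst z * (hi (snd z) - lo (snd z)) \<le> 1 * (hi (snd z) - lo (snd z))"
        using that lo_le_hi by (intro mult_right_mono) auto
      then show ?thesis using that lo_le_hi[of "snd z"] by (auto simp: s_def)
    qed
    then have "s ` ({0..1} \<times> P) \<subseteq> {z. snd z \<in> P \<and> fst z \<in> {lo (snd z)..hi (snd z)}}"
      by blast
    moreover have "continuous_on ({0..1} \<times> P) s"
      unfolding s_def
      by (intro continuous_intros continuous_on_compose2[OF lo] continuous_on_compose2[OF hi]) auto
    ultimately have "continuous_on ({0..1} \<times> P) ((\<lambda>z. f (fst z) (snd z)) \<circ> s)"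
      by (intro continuous_on_compose continuous_on_subset[OF f])
    then show "continuous_on ({0..1} \<times> P) (\<lambda>z. f (fst (s z)) (snd z))"
      by (simp add: o_def s_def)
  qed
  ultimately show ?thesis by (simp cong: continuous_on_cong)
qed

lemma continuous_on_root:
  fixes h :: "real \<Rightarrow> 'a::metric_space \<Rightarrow> real" and r :: "'a \<Rightarrow> real"
  assumes h: "continuous_on ({xa..xb} \<times> P) (\<lambda>z. h (fst z) (snd z))"
    and strict_mono: "\<And>p x y. p \<in> P \<Longrightarrow> xa \<le> x \<Longrightarrow> x < y \<Longrightarrow> y \<le> xb \<Longrightarrow> h x p < h y p"
    and root: "\<And>p. p \<in> P \<Longrightarrow> xa \<le> r p \<and> r p \<le> xb \<and> h (r p) p = 0"
  shows "continuous_on P r"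
  unfolding continuous_on_def
proof (intro ballI order_tendstoI)
  \<comment> \<open>on the interval, the sign of h a p tells on which side of a the root r p lies\<close>
  have root_gt_iff: "a < r p \<longleftrightarrow> h a p < 0" and root_lt_iff: "r p < a \<longleftrightarrow> 0 < h a p"
    if "p \<in> P" "xa \<le> a" "a \<le> xb" for a p
    using root[OF that(1)] strict_mono[OF that(1), of a "r p"] strict_mono[OF that(1), of "r p" a] that
    by (metis less_irrefl not_less_iff_gr_or_eq)+
  have h_tendsto: "((\<lambda>q. h a q) \<longlongrightarrow> h a p) (at p within P)" if "p \<in> P" "a \<in> {xa..xb}" for a p
  proof -
    have "continuous_on P ((\<lambda>z. h (fst z) (snd z)) \<circ> (\<lambda>q. (a, q)))"
      by (rule continuous_on_compose[OF _ continuous_on_subset[OF h]])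
         (use that in \<open>auto intro!: continuous_intros\<close>)
    then show ?thesis using that(1) by (simp add: continuous_on_def o_def)
  qed
  fix p a assume p: "p \<in> P"
  have in_P: "eventually (\<lambda>q. q \<in> P) (at p within P)"
    by (simp add: eventually_at_filter)
  {
    assume a: "a < r p"
    show "eventually (\<lambda>q. a < r q) (at p within P)"
    proof (cases "a < xa")
      case True
      show ?thesis using in_P by eventually_elim (use True root in \<open>auto intro: less_le_trans\<close>)
    next
      case False
      then have "h a p < 0" using a root[OF p] root_gt_iff[OF p, of a] by simp
      then have "eventually (\<lambda>q. h a q < 0) (at p within P)"
        using False a root[OF p] by (intro order_tendstoD(2)[OF h_tendsto[OF p]]) auto
      with in_P show ?thesis by eventually_elim (use False a root[OF p] root_gt_iff in auto)
    qed
  next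
    assume a: "r p < a"
    show "eventually (\<lambda>q. r q < a) (at p within P)"
    proof (cases "xb < a")
      case True
      show ?thesis using in_P by eventually_elim (use True root in \<open>auto intro: le_less_trans\<close>)
    next
      case False
      then have "0 < h a p" using a root[OF p] root_lt_iff[OF p, of a] by simp
      then have "eventually (\<lambda>q. 0 < h a q) (at p within P)"
        using False a root[OF p] by (intro order_tendstoD(1)[OF h_tendsto[OF p]]) auto
      with in_P show ?thesis by eventually_elim (use False a root[OF p] root_lt_iff in auto)
    qed
  }
qed

text \<open>The two regrets of a bid b are the suprema of the gains from deviating that
  two-point beliefs can produce: lowering the bid to a when all opponents sit at a or u,
  and raising the bid just above c when all opponents sit at l and c (for b \<ge> \<mu>) or at c
  and u (for b < \<mu>).\<close>

definition overbid_regret :: "real \<Rightarrow> real \<Rightarrow> real \<Rightarrow> nat \<Rightarrow> real \<Rightarrow> real" where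
  "overbid_regret l \<mu> u m b = Sup ((\<lambda>a. (b - a) * markov_bound \<mu> u a ^ m) ` {l..min b \<mu>})"

definition underbid_regret_high :: "real \<Rightarrow> real \<Rightarrow> nat \<Rightarrow> real \<Rightarrow> real \<Rightarrow> real" where
  "underbid_regret_high l \<mu> m v b = (v - b) * (1 - ((max b \<mu> - \<mu>) / (max b \<mu> - l)) ^ m)"

definition underbid_regret_low :: "real \<Rightarrow> real \<Rightarrow> nat \<Rightarrow> real \<Rightarrow> real \<Rightarrow> real" where
  "underbid_regret_low \<mu> u m v b = Sup ((\<lambda>x. (v - x) * markov_bound \<mu> u x ^ m) ` {min b \<mu>..\<mu>})"

text \<open>The minimum is the first term for b \<ge> \<mu> and the second one for b \<le> \<mu>; it glues
  the two cases into a single function that is jointly continuous in b and \<mu>.\<close>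

definition underbid_regret :: "real \<Rightarrow> real \<Rightarrow> real \<Rightarrow> nat \<Rightarrow> real \<Rightarrow> real \<Rightarrow> real" where
  "underbid_regret l \<mu> u m v b = min (underbid_regret_high l \<mu> m v b) (underbid_regret_low \<mu> u m v b)"

lemma continuous_on_underbid_regret_high:
  "l < \<mu> \<Longrightarrow> continuous_on S (underbid_regret_high l \<mu> m v)"
  unfolding underbid_regret_high_def by (intro continuous_intros) auto

locale regret_params =
  fixes l \<mu> u :: real and m :: nat
  assumes lower_less_mean: "l < \<mu>" and mean_less_upper: "\<mu> < u" and opponents_pos: "0 < m"
begin

lemma markov_bound_pos: "a < u \<Longrightarrow> 0 < markov_bound \<mu> u a"
  unfolding markov_bound_def using mean_less_upper by simp

lemma markov_bound_power_bounds: "a \<le> \<mu> \<Longrightarrow> 0 \<le> markov_bound \<mu> u a ^ m \<and> markov_bound \<mu> u a ^ m \<le> 1"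
  unfolding markov_bound_def using mean_less_upper by (simp add: power_le_one)

lemma markov_bound_at_mean [simp]: "markov_bound \<mu> u \<mu> = 1"
  unfolding markov_bound_def using mean_less_upper by simp

lemma markov_bound_power_mono: "a1 \<le> a2 \<Longrightarrow> a2 < u \<Longrightarrow> markov_bound \<mu> u a1 ^ m \<le> markov_bound \<mu> u a2 ^ m"
  unfolding markov_bound_def using mean_less_upper by (intro power_mono divide_left_mono) auto

lemma continuous_on_regret_term: "continuous_on {..\<mu>} (\<lambda>x. (w - x) * markov_bound \<mu> u x ^ m)"
  unfolding markov_bound_def using mean_less_upper by (intro continuous_intros) auto

lemma overbid_regret_ge:
  "l \<le> a \<Longrightarrow> a \<le> b \<Longrightarrow> a \<le> \<mu> \<Longrightarrow> (b - a) * markov_bound \<mu> u a ^ m \<le> overbid_regret l \<mu> u m b"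
  unfolding overbid_regret_def
  by (rule Sup_image_interval_ge) (auto intro: continuous_on_subset[OF continuous_on_regret_term])

lemma overbid_regret_le:
  "l \<le> b \<Longrightarrow> (\<And>a. l \<le> a \<Longrightarrow> a \<le> b \<Longrightarrow> a \<le> \<mu> \<Longrightarrow> (b - a) * markov_bound \<mu> u a ^ m \<le> R) \<Longrightarrow>
    overbid_regret l \<mu> u m b \<le> R"
  unfolding overbid_regret_def using lower_less_mean by (intro Sup_image_interval_le) auto

lemma overbid_regret_nonneg: "l \<le> b \<Longrightarrow> 0 \<le> overbid_regret l \<mu> u m b"
  using overbid_regret_ge[of "min b \<mu>" b] markov_bound_power_bounds[of "min b \<mu>"] lower_less_mean
  by (smt (verit) mult_nonneg_nonneg)

lemma overbid_regret_le_excess: "l \<le> b \<Longrightarrow> overbid_regret l \<mu> u m b \<le> b - l"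
proof (rule overbid_regret_le)
  fix a assume a: "l \<le> a" "a \<le> b" "a \<le> \<mu>"
  then have "(b - a) * markov_bound \<mu> u a ^ m \<le> (b - a) * 1"
    using markov_bound_power_bounds[of a] by (intro mult_left_mono) auto
  then show "(b - a) * markov_bound \<mu> u a ^ m \<le> b - l" using a by simp
qed

lemma overbid_regret_at_lower [simp]: "overbid_regret l \<mu> u m l = 0"
  using overbid_regret_le_excess[of l] overbid_regret_nonneg[of l] by simp

lemma overbid_regret_increase:
  assumes "l \<le> b1" "b1 < b2"
  shows "overbid_regret l \<mu> u m b1 + (b2 - b1) * markov_bound \<mu> u l ^ m \<le> overbid_regret l \<mu> u m b2"
proof -
  have "overbid_regret l \<mu> u m b1 \<le> overbid_regret l \<mu> u m b2 - (b2 - b1) * markov_bound \<mu> u l ^ m"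
  proof (rule overbid_regret_le)
    fix a assume a: "l \<le> a" "a \<le> b1" "a \<le> \<mu>"
    have "(b2 - b1) * markov_bound \<mu> u l ^ m \<le> (b2 - b1) * markov_bound \<mu> u a ^ m"
      using markov_bound_power_mono[of l a] a mean_less_upper assms by (intro mult_left_mono) auto
    moreover have "(b2 - a) * markov_bound \<mu> u a ^ m \<le> overbid_regret l \<mu> u m b2"
      by (rule overbid_regret_ge) (use a assms in auto)
    ultimately show "(b1 - a) * markov_bound \<mu> u a ^ m
        \<le> overbid_regret l \<mu> u m b2 - (b2 - b1) * markov_bound \<mu> u l ^ m"
      by (simp add: algebra_simps)
  qed (use assms in simp)
  then show ?thesis by simp
qed

lemma overbid_regret_strict_mono:
  "l \<le> b1 \<Longrightarrow> b1 < b2 \<Longrightarrow> overbid_regret l \<mu> u m b1 < overbid_regret l \<mu> u m b2"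
  using overbid_regret_increase[of b1 b2] markov_bound_pos[of l] lower_less_mean mean_less_upper
  by (smt (verit) mult_pos_pos zero_less_power)

lemma overbid_regret_at_upper: "overbid_regret l \<mu> u m u = u - \<mu>"
proof (rule antisym)
  show "overbid_regret l \<mu> u m u \<le> u - \<mu>"
  proof (rule overbid_regret_le)
    fix a assume a: "l \<le> a" "a \<le> u" "a \<le> \<mu>"
    have "markov_bound \<mu> u a ^ m \<le> markov_bound \<mu> u a ^ 1"
      using markov_bound_power_bounds[of a] markov_bound_pos[of a] a mean_less_upper opponents_pos
      by (intro power_decreasing) (auto simp: markov_bound_def)
    then have "(u - a) * markov_bound \<mu> u a ^ m \<le> (u - a) * markov_bound \<mu> u a"
      using a by (intro mult_left_mono) auto
    also have "\<dots> = u - \<mu>" unfolding markov_bound_def using a mean_less_upper by simp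
    finally show "(u - a) * markov_bound \<mu> u a ^ m \<le> u - \<mu>" .
  qed (use lower_less_mean mean_less_upper in simp)
  show "u - \<mu> \<le> overbid_regret l \<mu> u m u"
    using overbid_regret_ge[of \<mu> u] lower_less_mean mean_less_upper by simp
qed

lemma underbid_regret_low_ge:
  "min b \<mu> \<le> x \<Longrightarrow> x \<le> \<mu> \<Longrightarrow> (v - x) * markov_bound \<mu> u x ^ m \<le> underbid_regret_low \<mu> u m v b"
  unfolding underbid_regret_low_def
  by (rule Sup_image_interval_ge) (auto intro: continuous_on_subset[OF continuous_on_regret_term])

lemma underbid_regret_low_le:
  "(\<And>x. min b \<mu> \<le> x \<Longrightarrow> x \<le> \<mu> \<Longrightarrow> (v - x) * markov_bound \<mu> u x ^ m \<le> R) \<Longrightarrow>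
    underbid_regret_low \<mu> u m v b \<le> R"
  unfolding underbid_regret_low_def by (intro Sup_image_interval_le) auto

lemma underbid_regret_low_above_mean: "\<mu> \<le> b \<Longrightarrow> underbid_regret_low \<mu> u m v b = v - \<mu>"
  using underbid_regret_low_le[of b v "v - \<mu>"] underbid_regret_low_ge[of b \<mu> v] by simp

lemma win_ratio_bounds:
  assumes "\<mu> \<le> s"
  shows "0 \<le> ((s - \<mu>) / (s - l)) ^ m \<and> ((s - \<mu>) / (s - l)) ^ m < 1"
proof -
  have "0 \<le> (s - \<mu>) / (s - l)" "(s - \<mu>) / (s - l) < 1"
    using assms lower_less_mean by (auto simp: divide_simps)
  then show ?thesis using opponents_pos by (simp add: power_less_one_iff)
qed

lemma win_ratio_mono:
  assumes "\<mu> \<le> s1" "s1 \<le> s2"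
  shows "((s1 - \<mu>) / (s1 - l)) ^ m \<le> ((s2 - \<mu>) / (s2 - l)) ^ m"
proof -
  have "(s2 - \<mu>) * (s1 - l) - (s1 - \<mu>) * (s2 - l) = (s2 - s1) * (\<mu> - l)"
    by (simp add: algebra_simps)
  moreover have "0 \<le> (s2 - s1) * (\<mu> - l)" using assms lower_less_mean by simp
  ultimately have "(s1 - \<mu>) * (s2 - l) \<le> (s2 - \<mu>) * (s1 - l)" by linarith
  then have "(s1 - \<mu>) / (s1 - l) \<le> (s2 - \<mu>) / (s2 - l)"
    using assms lower_less_mean by (simp add: divide_simps)
  then show ?thesis using assms lower_less_mean by (intro power_mono) auto
qed

lemma underbid_regret_high_below_mean: "b \<le> \<mu> \<Longrightarrow> underbid_regret_high l \<mu> m v b = v - b"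
  unfolding underbid_regret_high_def using opponents_pos by (simp add: max_def)

lemma underbid_regret_high_above_mean:
  "\<mu> \<le> b \<Longrightarrow> underbid_regret_high l \<mu> m v b = (v - b) * (1 - ((b - \<mu>) / (b - l)) ^ m)"
  unfolding underbid_regret_high_def by (simp add: max_def)

lemma underbid_regret_eq_high:
  assumes "\<mu> \<le> b" "b \<le> v"
  shows "underbid_regret l \<mu> u m v b = (v - b) * (1 - ((b - \<mu>) / (b - l)) ^ m)"
proof -
  have "(v - b) * (1 - ((b - \<mu>) / (b - l)) ^ m) \<le> (v - b) * 1"
    using win_ratio_bounds[of b] assms by (intro mult_left_mono) auto
  then show ?thesis
    unfolding underbid_regret_def
    using assms underbid_regret_high_above_mean underbid_regret_low_above_mean by simp
qed

lemma underbid_regret_eq_low: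
  assumes "b \<le> \<mu>" "b \<le> v"
  shows "underbid_regret l \<mu> u m v b = underbid_regret_low \<mu> u m v b"
proof -
  have "underbid_regret_low \<mu> u m v b \<le> v - b"
  proof (rule underbid_regret_low_le)
    fix x assume x: "min b \<mu> \<le> x" "x \<le> \<mu>"
    have "(v - x) * markov_bound \<mu> u x ^ m \<le> max 0 (v - x)"
      using markov_bound_power_bounds[OF x(2)] by (smt (verit) mult_left_le mult_nonpos_nonneg)
    then show "(v - x) * markov_bound \<mu> u x ^ m \<le> v - b" using x assms by simp
  qed
  then show ?thesis
    unfolding underbid_regret_def using underbid_regret_high_below_mean assms by simp
qed

lemma underbid_regret_high_antimono:
  assumes "b1 \<le> b2" "b2 \<le> v"
  shows "underbid_regret_high l \<mu> m v b2 \<le> underbid_regret_high l \<mu> m v b1"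
proof (cases "b2 \<le> \<mu>")
  case True
  then show ?thesis using assms underbid_regret_high_below_mean by simp
next
  case b2_above: False
  then have high_b2: "underbid_regret_high l \<mu> m v b2 \<le> v - b2"
    using underbid_regret_high_above_mean[of b2] win_ratio_bounds[of b2] assms
    by (simp add: mult_left_le)
  show ?thesis
  proof (cases "b1 \<le> \<mu>")
    case True
    then show ?thesis using high_b2 underbid_regret_high_below_mean assms by simp
  next
    case False
    then have "(v - b2) * (1 - ((b2 - \<mu>) / (b2 - l)) ^ m) \<le> (v - b1) * (1 - ((b1 - \<mu>) / (b1 - l)) ^ m)"
      using assms win_ratio_mono[of b1 b2] win_ratio_bounds[of b1] win_ratio_bounds[of b2]
      by (intro mult_mono) auto
    then show ?thesis using False b2_above underbid_regret_high_above_mean by simp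
  qed
qed

lemma underbid_regret_antimono:
  assumes "b1 \<le> b2" "b2 \<le> v"
  shows "underbid_regret l \<mu> u m v b2 \<le> underbid_regret l \<mu> u m v b1"
proof -
  have "underbid_regret_low \<mu> u m v b2 \<le> underbid_regret_low \<mu> u m v b1"
    using assms by (intro underbid_regret_low_le underbid_regret_low_ge) auto
  then show ?thesis
    unfolding underbid_regret_def using underbid_regret_high_antimono[OF assms] by linarith
qed

lemma underbid_regret_strict_mono_value:
  assumes "v1 < v2" "l \<le> b"
  shows "underbid_regret l \<mu> u m v1 b < underbid_regret l \<mu> u m v2 b"
proof -
  have "underbid_regret_high l \<mu> m v1 b < underbid_regret_high l \<mu> m v2 b"
    unfolding underbid_regret_high_def using win_ratio_bounds[of "max b \<mu>"] assms
    by (intro mult_strict_right_mono) auto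
  moreover have "underbid_regret_low \<mu> u m v1 b
      \<le> underbid_regret_low \<mu> u m v2 b - (v2 - v1) * markov_bound \<mu> u l ^ m"
  proof (rule underbid_regret_low_le)
    fix x assume x: "min b \<mu> \<le> x" "x \<le> \<mu>"
    have "(v2 - v1) * markov_bound \<mu> u l ^ m \<le> (v2 - v1) * markov_bound \<mu> u x ^ m"
      using markov_bound_power_mono[of l x] x mean_less_upper assms lower_less_mean
      by (intro mult_left_mono) auto
    moreover have "(v2 - x) * markov_bound \<mu> u x ^ m \<le> underbid_regret_low \<mu> u m v2 b"
      by (rule underbid_regret_low_ge) (use x in auto)
    ultimately show "(v1 - x) * markov_bound \<mu> u x ^ m
        \<le> underbid_regret_low \<mu> u m v2 b - (v2 - v1) * markov_bound \<mu> u l ^ m"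
      by (simp add: algebra_simps)
  qed
  moreover have "0 < (v2 - v1) * markov_bound \<mu> u l ^ m"
    using assms markov_bound_pos[of l] lower_less_mean mean_less_upper by simp
  ultimately show ?thesis unfolding underbid_regret_def by linarith
qed

lemma underbid_regret_at_value: "underbid_regret l \<mu> u m v v \<le> 0"
  unfolding underbid_regret_def underbid_regret_high_def by simp

lemma underbid_regret_at_lower_nonneg: "l \<le> v \<Longrightarrow> 0 \<le> underbid_regret l \<mu> u m v l"
  using underbid_regret_eq_low[of l v] underbid_regret_low_ge[of l l v]
    markov_bound_power_bounds[of l] lower_less_mean
  by (smt (verit) mult_nonneg_nonneg)

end

definition interval_root :: "real \<Rightarrow> real \<Rightarrow> (real \<Rightarrow> real) \<Rightarrow> real" where
  "interval_root x0 x1 h = (THE x. x0 \<le> x \<and> x \<le> x1 \<and> h x = 0)"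

lemma interval_root_eqI:
  assumes strict_mono: "\<And>x y. x0 \<le> x \<Longrightarrow> x < y \<Longrightarrow> y \<le> x1 \<Longrightarrow> h x < h y"
    and y: "x0 \<le> y" "y \<le> x1" "h y = 0"
  shows "interval_root x0 x1 h = y"
  unfolding interval_root_def
proof (rule the_equality)
  fix x assume "x0 \<le> x \<and> x \<le> x1 \<and> h x = 0"
  then show "x = y" using strict_mono[of x y] strict_mono[of y x] y by (metis less_irrefl linorder_cases)
qed (use y in simp)

lemma interval_root_is_root:
  assumes "x0 \<le> x1" "continuous_on {x0..x1} h" "h x0 \<le> 0" "0 \<le> h x1"
    and strict_mono: "\<And>x y. x0 \<le> x \<Longrightarrow> x < y \<Longrightarrow> y \<le> x1 \<Longrightarrow> h x < h y"
  shows "x0 \<le> interval_root x0 x1 h \<and> interval_root x0 x1 h \<le> x1 \<and> h (interval_root x0 x1 h) = 0"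
proof -
  obtain y where y: "x0 \<le> y" "y \<le> x1" "h y = 0" using IVT'[of h x0 0 x1] assms by auto
  then show ?thesis using interval_root_eqI[where h=h, OF strict_mono y] by simp
qed

text \<open>At b = u the overbidding regret equals u - \<mu> (lemma overbid_regret_at_upper), so a
  root of this gap is the upper belief u at which the highest value V bids exactly u.\<close>

definition top_bid_gap :: "real \<Rightarrow> real \<Rightarrow> nat \<Rightarrow> real \<Rightarrow> real \<Rightarrow> real" where
  "top_bid_gap l V m \<mu> u = u - \<mu> - underbid_regret_high l \<mu> m V u"

definition top_bid :: "real \<Rightarrow> real \<Rightarrow> nat \<Rightarrow> real \<Rightarrow> real" where
  "top_bid l V m \<mu> = interval_root l V (top_bid_gap l V m \<mu>)"

definition regret_gap :: "real \<Rightarrow> real \<Rightarrow> real \<Rightarrow> nat \<Rightarrow> real \<Rightarrow> real \<Rightarrow> real" where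
  "regret_gap l \<mu> u m v b = overbid_regret l \<mu> u m b - underbid_regret l \<mu> u m v b"

definition minimax_bid :: "real \<Rightarrow> real \<Rightarrow> nat \<Rightarrow> real \<Rightarrow> real \<Rightarrow> real" where
  "minimax_bid l V m \<mu> v = interval_root l v (regret_gap l \<mu> (top_bid l V m \<mu>) m v)"

lemma continuous_on_top_bid_gap: "l < \<mu> \<Longrightarrow> continuous_on S (top_bid_gap l V m \<mu>)"
  unfolding top_bid_gap_def using continuous_on_underbid_regret_high by (intro continuous_intros) auto

lemma top_bid_gap_strict_mono:
  assumes "l < \<mu>" "\<mu> < V" "0 < m" "x < y" "y \<le> V"
  shows "top_bid_gap l V m \<mu> x < top_bid_gap l V m \<mu> y"
proof -
  interpret regret_params l \<mu> V m using assms by unfold_locales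
  show ?thesis unfolding top_bid_gap_def using underbid_regret_high_antimono[of x y V] assms by simp
qed

lemma top_bid_spec:
  assumes "l < \<mu>" "\<mu> < V" "0 < m"
  shows "\<mu> < top_bid l V m \<mu>" "top_bid l V m \<mu> < V" "top_bid_gap l V m \<mu> (top_bid l V m \<mu>) = 0"
proof -
  interpret regret_params l \<mu> V m using assms by unfold_locales
  have signs: "top_bid_gap l V m \<mu> l \<le> 0" "top_bid_gap l V m \<mu> \<mu> < 0" "0 < top_bid_gap l V m \<mu> V"
    unfolding top_bid_gap_def
    using underbid_regret_high_below_mean[of l V] underbid_regret_high_below_mean[of \<mu> V]
      underbid_regret_high_above_mean[of V V] assms
    by simp_all
  have root: "l \<le> top_bid l V m \<mu> \<and> top_bid l V m \<mu> \<le> V \<and> top_bid_gap l V m \<mu> (top_bid l V m \<mu>) = 0"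
    unfolding top_bid_def using assms signs
    by (intro interval_root_is_root continuous_on_top_bid_gap top_bid_gap_strict_mono) auto
  then show "top_bid_gap l V m \<mu> (top_bid l V m \<mu>) = 0" by simp
  show "\<mu> < top_bid l V m \<mu>"
  proof (rule ccontr)
    assume "\<not> \<mu> < top_bid l V m \<mu>"
    then have "top_bid_gap l V m \<mu> (top_bid l V m \<mu>) \<le> top_bid_gap l V m \<mu> \<mu>"
      using top_bid_gap_strict_mono[OF assms, of "top_bid l V m \<mu>" \<mu>] assms
      by (cases "top_bid l V m \<mu> = \<mu>") auto
    then show False using root signs by simp
  qed
  show "top_bid l V m \<mu> < V"
    using root signs by (cases "top_bid l V m \<mu> = V") auto
qed

lemma continuous_on_overbid_regret_joint:
  fixes U :: "real \<Rightarrow> real"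
  assumes M: "compact M" and U: "continuous_on M U" and MU: "\<And>\<mu>. \<mu> \<in> M \<Longrightarrow> l < \<mu> \<and> \<mu> < U \<mu>"
  shows "continuous_on ({l..V} \<times> M) (\<lambda>p. overbid_regret l (snd p) (U (snd p)) m (fst p))"
  unfolding overbid_regret_def
proof (rule continuous_on_Sup_image_interval[where lo="\<lambda>p. l" and hi="\<lambda>p. min (fst p) (snd p)"])
  let ?S = "{z. snd z \<in> {l..V} \<times> M \<and> fst z \<in> {l..min (fst (snd z)) (snd (snd z))}}"
  have "continuous_on ?S (\<lambda>z. U (snd (snd z)))"
    using U by (rule continuous_on_compose2) (auto intro!: continuous_intros)
  moreover have "\<And>z. z \<in> ?S \<Longrightarrow> U (snd (snd z)) - fst z \<noteq> 0" using MU by force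
  ultimately show "continuous_on ?S (\<lambda>z. (fst (snd z) - fst z) * markov_bound (snd (snd z)) (U (snd (snd z))) (fst z) ^ m)"
    unfolding markov_bound_def by (intro continuous_intros) auto
qed (use M MU in \<open>auto simp: compact_Times less_imp_le intro!: continuous_intros\<close>)

lemma continuous_on_underbid_regret_joint:
  fixes U :: "real \<Rightarrow> real"
  assumes M: "compact M" and U: "continuous_on M U" and MU: "\<And>\<mu>. \<mu> \<in> M \<Longrightarrow> l < \<mu> \<and> \<mu> < U \<mu>"
  shows "continuous_on ({l..V} \<times> M) (\<lambda>p. underbid_regret l (snd p) (U (snd p)) m v (fst p))"
proof -
  let ?S = "{z. snd z \<in> {l..V} \<times> M \<and> fst z \<in> {min (fst (snd z)) (snd (snd z))..snd (snd z)}}"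
  have "continuous_on ({l..V} \<times> M) (\<lambda>p. underbid_regret_low (snd p) (U (snd p)) m v (fst p))"
    unfolding underbid_regret_low_def
  proof (rule continuous_on_Sup_image_interval[where lo="\<lambda>p. min (fst p) (snd p)" and hi=snd])
    have "continuous_on ?S (\<lambda>z. U (snd (snd z)))"
      using U by (rule continuous_on_compose2) (auto intro!: continuous_intros)
    moreover have "\<And>z. z \<in> ?S \<Longrightarrow> U (snd (snd z)) - fst z \<noteq> 0" using MU by force
    ultimately show "continuous_on ?S (\<lambda>z. (v - fst z) * markov_bound (snd (snd z)) (U (snd (snd z))) (fst z) ^ m)"
      unfolding markov_bound_def by (intro continuous_intros) auto
  qed (use M in \<open>auto simp: compact_Times intro!: continuous_intros\<close>)
  moreover have "continuous_on ({l..V} \<times> M) (\<lambda>p. underbid_regret_high l (snd p) m v (fst p))"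
  proof -
    have "\<And>p. p \<in> {l..V} \<times> M \<Longrightarrow> max (fst p) (snd p) - l \<noteq> 0" using MU by force
    then show ?thesis unfolding underbid_regret_high_def by (intro continuous_intros) auto
  qed
  ultimately show ?thesis unfolding underbid_regret_def by (intro continuous_intros)
qed

lemma continuous_on_top_bid:
  assumes "l < \<mu>1" "\<mu>2 < V" "0 < m"
  shows "continuous_on {\<mu>1..\<mu>2} (top_bid l V m)"
  unfolding top_bid_def
proof (rule continuous_on_root[where h="\<lambda>u \<mu>. top_bid_gap l V m \<mu> u" and xa=l and xb=V])
  have "\<And>p. p \<in> {l..V} \<times> {\<mu>1..\<mu>2} \<Longrightarrow> max (fst p) (snd p) - l \<noteq> 0" using assms by force
  then show "continuous_on ({l..V} \<times> {\<mu>1..\<mu>2}) (\<lambda>z. top_bid_gap l V m (snd z) (fst z))"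
    unfolding top_bid_gap_def underbid_regret_high_def by (intro continuous_intros) auto
next
  fix \<mu> x y assume "\<mu> \<in> {\<mu>1..\<mu>2}" "l \<le> x" "x < y" "y \<le> V"
  then show "top_bid_gap l V m \<mu> x < top_bid_gap l V m \<mu> y" using top_bid_gap_strict_mono[of l \<mu> V m x y] assms by auto
next
  fix \<mu> assume "\<mu> \<in> {\<mu>1..\<mu>2}"
  then show "l \<le> interval_root l V (top_bid_gap l V m \<mu>) \<and> interval_root l V (top_bid_gap l V m \<mu>) \<le> V \<and>
      top_bid_gap l V m \<mu> (interval_root l V (top_bid_gap l V m \<mu>)) = 0"
    using top_bid_spec[of l \<mu> V m] assms unfolding top_bid_def by force
qed

locale minimax_bidding =
  fixes l V :: real and m :: nat and \<mu> :: real
  assumes lower_nonneg: "0 \<le> l" and lower_less_mean: "l < \<mu>" and mean_less_top: "\<mu> < V"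
    and opponents_pos: "0 < m"
begin

abbreviation u :: real where "u \<equiv> top_bid l V m \<mu>"

lemma mean_less_u: "\<mu> < u" and u_less_top: "u < V" and top_bid_gap_u: "top_bid_gap l V m \<mu> u = 0"
  using top_bid_spec[OF lower_less_mean mean_less_top opponents_pos] by auto

sublocale regret_params l \<mu> u m
  using lower_less_mean mean_less_u opponents_pos by unfold_locales

lemma continuous_on_regret_gap: "continuous_on {l..V} (regret_gap l \<mu> u m v)"
proof -
  have "continuous_on ({l..V} \<times> {\<mu>}) (\<lambda>p. overbid_regret l (snd p) u m (fst p) - underbid_regret l (snd p) u m v (fst p))"
    using continuous_on_overbid_regret_joint[of "{\<mu>}" "\<lambda>_. u" l V m]
      continuous_on_underbid_regret_joint[of "{\<mu>}" "\<lambda>_. u" l V m v] lower_less_mean mean_less_u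
    by (intro continuous_intros) auto
  then have "continuous_on {l..V} (\<lambda>b. overbid_regret l (snd (b, \<mu>)) u m (fst (b, \<mu>))
      - underbid_regret l (snd (b, \<mu>)) u m v (fst (b, \<mu>)))"
    by (rule continuous_on_compose2) (auto intro!: continuous_intros)
  then show ?thesis unfolding regret_gap_def by simp
qed

lemma regret_gap_strict_mono: "l \<le> x \<Longrightarrow> x < y \<Longrightarrow> y \<le> v \<Longrightarrow> regret_gap l \<mu> u m v x < regret_gap l \<mu> u m v y"
  unfolding regret_gap_def using overbid_regret_strict_mono[of x y] underbid_regret_antimono[of x y v] by simp

lemma minimax_bid_root:
  assumes "l \<le> v" "v \<le> V"
  shows "l \<le> minimax_bid l V m \<mu> v \<and> minimax_bid l V m \<mu> v \<le> v \<and> regret_gap l \<mu> u m v (minimax_bid l V m \<mu> v) = 0"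
  unfolding minimax_bid_def
proof (rule interval_root_is_root)
  show "continuous_on {l..v} (regret_gap l \<mu> u m v)"
    using assms by (intro continuous_on_subset[OF continuous_on_regret_gap]) auto
  show "regret_gap l \<mu> u m v l \<le> 0"
    unfolding regret_gap_def using underbid_regret_at_lower_nonneg[OF assms(1)] by simp
  show "0 \<le> regret_gap l \<mu> u m v v"
    unfolding regret_gap_def using overbid_regret_nonneg[OF assms(1)] underbid_regret_at_value[of v] by simp
qed (use assms regret_gap_strict_mono in auto)

lemma minimax_bid_balances:
  "l \<le> v \<Longrightarrow> v \<le> V \<Longrightarrow>
    overbid_regret l \<mu> u m (minimax_bid l V m \<mu> v) = underbid_regret l \<mu> u m v (minimax_bid l V m \<mu> v)"
  using minimax_bid_root unfolding regret_gap_def by force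

lemma minimax_bid_strict_mono:
  assumes "l \<le> v1" "v1 < v2" "v2 \<le> V"
  shows "minimax_bid l V m \<mu> v1 < minimax_bid l V m \<mu> v2"
proof (rule ccontr)
  let ?c1 = "minimax_bid l V m \<mu> v1" and ?c2 = "minimax_bid l V m \<mu> v2"
  assume "\<not> ?c1 < ?c2"
  have c1: "l \<le> ?c1" "?c1 \<le> v1" "regret_gap l \<mu> u m v1 ?c1 = 0" using minimax_bid_root[of v1] assms by auto
  have c2: "l \<le> ?c2" "?c2 \<le> v2" "regret_gap l \<mu> u m v2 ?c2 = 0" using minimax_bid_root[of v2] assms by auto
  have "regret_gap l \<mu> u m v2 ?c1 < regret_gap l \<mu> u m v1 ?c1"
    unfolding regret_gap_def using underbid_regret_strict_mono_value[OF assms(2) c1(1)] by simp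
  moreover have "regret_gap l \<mu> u m v2 ?c2 \<le> regret_gap l \<mu> u m v2 ?c1"
    using \<open>\<not> ?c1 < ?c2\<close> regret_gap_strict_mono[of ?c2 ?c1 v2] c1 c2 assms by (cases "?c2 = ?c1") auto
  ultimately show False using c1 c2 by simp
qed

lemma minimax_bid_mono: "l \<le> v1 \<Longrightarrow> v1 \<le> v2 \<Longrightarrow> v2 \<le> V \<Longrightarrow> minimax_bid l V m \<mu> v1 \<le> minimax_bid l V m \<mu> v2"
  using minimax_bid_strict_mono[of v1 v2] by (cases "v1 = v2") auto

lemma minimax_bid_at_lower: "minimax_bid l V m \<mu> l = l"
  using minimax_bid_root[of l] lower_less_mean mean_less_top by auto

lemma minimax_bid_at_top: "minimax_bid l V m \<mu> V = u"
  unfolding minimax_bid_def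
proof (rule interval_root_eqI)
  have "underbid_regret l \<mu> u m V u = underbid_regret_high l \<mu> m V u"
    using underbid_regret_eq_high[of u V] underbid_regret_high_above_mean[of u V] mean_less_u u_less_top
    by simp
  then show "regret_gap l \<mu> u m V u = 0"
    using overbid_regret_at_upper top_bid_gap_u unfolding regret_gap_def top_bid_gap_def by simp
qed (use regret_gap_strict_mono mean_less_u u_less_top lower_less_mean in auto)

lemma minimax_bid_le_u: "l \<le> v \<Longrightarrow> v \<le> V \<Longrightarrow> minimax_bid l V m \<mu> v \<le> u"
  using minimax_bid_mono[of v V] minimax_bid_at_top lower_less_mean mean_less_top by simp

end

lemma continuous_on_minimax_bid:
  assumes "0 \<le> l" "l < \<mu>1" "\<mu>2 < V" "0 < m" "l \<le> v" "v \<le> V"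
  shows "continuous_on {\<mu>1..\<mu>2} (\<lambda>\<mu>. minimax_bid l V m \<mu> v)"
  unfolding minimax_bid_def
proof (rule continuous_on_root[where h="\<lambda>b \<mu>. regret_gap l \<mu> (top_bid l V m \<mu>) m v b" and xa=l and xb=v])
  have U: "continuous_on {\<mu>1..\<mu>2} (top_bid l V m)" by (rule continuous_on_top_bid) (use assms in auto)
  have MU: "\<And>\<mu>. \<mu> \<in> {\<mu>1..\<mu>2} \<Longrightarrow> l < \<mu> \<and> \<mu> < top_bid l V m \<mu>"
    using top_bid_spec assms by force
  have "continuous_on ({l..V} \<times> {\<mu>1..\<mu>2}) (\<lambda>z. regret_gap l (snd z) (top_bid l V m (snd z)) m v (fst z))"
    unfolding regret_gap_def
    using continuous_on_overbid_regret_joint[OF _ U MU] continuous_on_underbid_regret_joint[OF _ U MU]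
    by (intro continuous_intros) auto
  then show "continuous_on ({l..v} \<times> {\<mu>1..\<mu>2}) (\<lambda>z. regret_gap l (snd z) (top_bid l V m (snd z)) m v (fst z))"
    by (rule continuous_on_subset) (use assms in auto)
next
  fix \<mu> x y assume "\<mu> \<in> {\<mu>1..\<mu>2}" "l \<le> x" "x < y" "y \<le> v"
  then show "regret_gap l \<mu> (top_bid l V m \<mu>) m v x < regret_gap l \<mu> (top_bid l V m \<mu>) m v y"
    using minimax_bidding.regret_gap_strict_mono[of l V m \<mu> x y v] assms by (auto simp: minimax_bidding_def)
next
  fix \<mu> assume "\<mu> \<in> {\<mu>1..\<mu>2}"
  then show "l \<le> interval_root l v (regret_gap l \<mu> (top_bid l V m \<mu>) m v) \<and>
      interval_root l v (regret_gap l \<mu> (top_bid l V m \<mu>) m v) \<le> v \<and>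
      regret_gap l \<mu> (top_bid l V m \<mu>) m v (interval_root l v (regret_gap l \<mu> (top_bid l V m \<mu>) m v)) = 0"
    using minimax_bidding.minimax_bid_root[of l V m \<mu> v] assms
    unfolding minimax_bid_def by (auto simp: minimax_bidding_def)
qed

context minimax_bidding
begin

lemma max_loss_ge_overbid_regret:
  assumes J: "finite J" "card J = m" and b: "l < b"
  shows "ereal (overbid_regret l \<mu> u m b) \<le> max_loss J l \<mu> u v b"
  unfolding overbid_regret_def
proof (rule ereal_Sup_image_interval_le)
  fix a assume a: "l \<le> a" "a \<le> min b \<mu>"
  show "ereal ((b - a) * markov_bound \<mu> u a ^ m) \<le> max_loss J l \<mu> u v b"
  proof (cases "b < u \<or> a = \<mu>")
    case True
    show ?thesis
    proof (cases "a = b")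
      case False
      show ?thesis
      proof (rule ereal_le_at_left_endpoint[where g="\<lambda>b'. (b - b') * markov_bound \<mu> u a ^ m"])
        fix b' assume "a < b'" "b' < b"
        then show "ereal ((b - b') * markov_bound \<mu> u a ^ m) \<le> max_loss J l \<mu> u v b"
          using max_loss_ge_overbid_gain[of J l a \<mu> u b' b] J a True lower_nonneg mean_less_u by simp
      qed (use False a in \<open>auto intro!: continuous_intros\<close>)
    qed (use max_loss_nonneg lower_nonneg lower_less_mean mean_less_u b in \<open>simp add: zero_ereal_def\<close>)
  next
    case False
    \<comment> \<open>for b \<ge> u the term at a is dominated by the term at a = \<mu>\<close>
    then have au: "u \<le> b" "a < \<mu>" using a by auto
    have "(b - a) * markov_bound \<mu> u a ^ m
        = (u - a) * markov_bound \<mu> u a ^ m + (b - u) * markov_bound \<mu> u a ^ m"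
      by (simp add: algebra_simps)
    also have "(u - a) * markov_bound \<mu> u a ^ m \<le> (u - a) * markov_bound \<mu> u a ^ 1"
      using markov_bound_pos[of a] markov_bound_power_bounds[of a] a au mean_less_u opponents_pos
      by (intro mult_left_mono power_decreasing) (auto simp: markov_bound_def)
    also have "(u - a) * markov_bound \<mu> u a ^ 1 = u - \<mu>"
      unfolding markov_bound_def using au mean_less_u by simp
    also have "(b - u) * markov_bound \<mu> u a ^ m \<le> (b - u) * 1"
      using markov_bound_power_bounds[of a] au by (intro mult_left_mono) auto
    finally have "(b - a) * markov_bound \<mu> u a ^ m \<le> (b - \<mu>) * markov_bound \<mu> u \<mu> ^ m" by simp
    moreover have "ereal ((b - \<mu>) * markov_bound \<mu> u \<mu> ^ m) \<le> max_loss J l \<mu> u v b"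
      by (rule ereal_le_at_left_endpoint[where g="\<lambda>b'. (b - b') * markov_bound \<mu> u \<mu> ^ m"])
         (use max_loss_ge_overbid_gain[of J l \<mu> \<mu> u _ b] J au lower_nonneg lower_less_mean mean_less_u
           in \<open>auto intro!: continuous_intros\<close>)
    ultimately show ?thesis by (meson ereal_less_eq(3) order_trans)
  qed
qed (use b lower_less_mean in simp)

lemma max_loss_ge_underbid_regret_high:
  assumes J: "finite J" "card J = m" and b: "\<mu> \<le> b" "b < u"
  shows "ereal (underbid_regret_high l \<mu> m v b) \<le> max_loss J l \<mu> u v b"
proof -
  have deviation: "ereal ((v - c) - (v - b) * ((c - \<mu>) / (c - l)) ^ m) \<le> max_loss J l \<mu> u v b"
    if c: "b < c" "c \<le> u" for c
  proof (rule ereal_le_at_left_endpoint[where g="\<lambda>b'. (v - b') - (v - b) * ((c - \<mu>) / (c - l)) ^ m"])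
    fix b' assume "c < b'" "b' < c + 1"
    then show "ereal ((v - b') - (v - b) * ((c - \<mu>) / (c - l)) ^ m) \<le> max_loss J l \<mu> u v b"
      using max_loss_ge_underbid_gain_high[of J l \<mu> b c u b' v] J b c lower_nonneg lower_less_mean
      by simp
  qed (auto intro!: continuous_intros)
  have "ereal ((v - b) - (v - b) * ((b - \<mu>) / (b - l)) ^ m) \<le> max_loss J l \<mu> u v b"
  proof (rule ereal_le_at_left_endpoint[where g="\<lambda>c. (v - c) - (v - b) * ((c - \<mu>) / (c - l)) ^ m"])
    show "continuous_on {b..u} (\<lambda>c. (v - c) - (v - b) * ((c - \<mu>) / (c - l)) ^ m)"
      using b lower_less_mean by (intro continuous_intros) auto
    fix c assume "b < c" "c < u"
    then show "ereal ((v - c) - (v - b) * ((c - \<mu>) / (c - l)) ^ m) \<le> max_loss J l \<mu> u v b"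
      by (intro deviation) auto
  qed (rule b(2))
  moreover have "underbid_regret_high l \<mu> m v b = (v - b) - (v - b) * ((b - \<mu>) / (b - l)) ^ m"
    using underbid_regret_high_above_mean[OF b(1)] by (simp add: right_diff_distrib)
  ultimately show ?thesis by simp
qed

lemma max_loss_ge_underbid_regret_low:
  assumes J: "finite J" "card J = m" and b: "0 \<le> b" "b < \<mu>"
  shows "ereal (underbid_regret_low \<mu> u m v (max b l)) \<le> max_loss J l \<mu> u v b"
proof -
  have J_nonempty: "J \<noteq> {}" using J opponents_pos by auto
  have deviation: "ereal ((v - c) * markov_bound \<mu> u c ^ m) \<le> max_loss J l \<mu> u v b"
    if c: "b < c" "c \<le> \<mu>" "l \<le> c" for c
  proof (rule ereal_le_at_left_endpoint[where g="\<lambda>b'. (v - b') * markov_bound \<mu> u c ^ m"])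
    fix b' assume "c < b'" "b' < u"
    then show "ereal ((v - b') * markov_bound \<mu> u c ^ m) \<le> max_loss J l \<mu> u v b"
      using max_loss_ge_underbid_gain_low[OF J(1) J_nonempty lower_nonneg c(3,1,2) mean_less_u] J
      by simp
  qed (use c mean_less_u in \<open>auto intro!: continuous_intros\<close>)
  show ?thesis
    unfolding underbid_regret_low_def
  proof (rule ereal_Sup_image_interval_le)
    fix x assume x: "min (max b l) \<mu> \<le> x" "x \<le> \<mu>"
    show "ereal ((v - x) * markov_bound \<mu> u x ^ m) \<le> max_loss J l \<mu> u v b"
    proof (cases "x = b")
      case True
      show ?thesis
      proof (rule ereal_le_at_left_endpoint[where g="\<lambda>x. (v - x) * markov_bound \<mu> u x ^ m"])
        show "continuous_on {x..\<mu>} (\<lambda>x. (v - x) * markov_bound \<mu> u x ^ m)"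
          by (rule continuous_on_subset[OF continuous_on_regret_term]) auto
        fix t assume "x < t" "t < \<mu>"
        then show "ereal ((v - t) * markov_bound \<mu> u t ^ m) \<le> max_loss J l \<mu> u v b"
          using True x b by (intro deviation) auto
      qed (use True b in simp)
    next
      case False
      then show ?thesis using x b lower_less_mean by (intro deviation) auto
    qed
  qed simp
qed

lemma max_loss_ge_underbid_regret:
  assumes "finite J" "card J = m" "0 \<le> b" "b < u"
  shows "ereal (underbid_regret l \<mu> u m v (max b l)) \<le> max_loss J l \<mu> u v b"
proof (cases "\<mu> \<le> b")
  case True
  then have "underbid_regret l \<mu> u m v (max b l) \<le> underbid_regret_high l \<mu> m v b"
    unfolding underbid_regret_def using lower_less_mean by (simp add: max_def)
  then show ?thesis
    using max_loss_ge_underbid_regret_high[OF assms(1,2) True assms(4), of v]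
    by (meson ereal_less_eq(3) order_trans)
next
  case False
  then have "underbid_regret l \<mu> u m v (max b l) \<le> underbid_regret_low \<mu> u m v (max b l)"
    unfolding underbid_regret_def by simp
  then show ?thesis
    using max_loss_ge_underbid_regret_low[OF assms(1-3), of v] False
    by (meson ereal_less_eq(3) order_trans not_le)
qed

end

context minimax_bidding
begin

lemma max_loss_minimax_bid_le:
  assumes J: "finite J" "card J = m" and v: "l \<le> v" "v \<le> V"
  shows "max_loss J l \<mu> u v (minimax_bid l V m \<mu> v) \<le> ereal (overbid_regret l \<mu> u m (minimax_bid l V m \<mu> v))"
  unfolding max_loss_def
proof (rule SUP_least)
  let ?c = "minimax_bid l V m \<mu> v"
  have c: "l \<le> ?c" "?c \<le> v" using minimax_bid_root[OF v] by auto
  have balance: "overbid_regret l \<mu> u m ?c = underbid_regret l \<mu> u m v ?c"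
    using minimax_bid_balances[OF v] .
  have "J \<noteq> {}" using J opponents_pos by auto
  fix B assume "B \<in> belief_set J l \<mu> u"
  then show "loss J B v ?c \<le> ereal (overbid_regret l \<mu> u m ?c)"
  proof (rule loss_le_regret_bound[OF J(1) \<open>J \<noteq> {}\<close> _ lower_less_mean mean_less_u c(2)
        overbid_regret_nonneg[OF c(1)]])
    fix a assume "l \<le> a" "a \<le> ?c" "a \<le> \<mu>"
    then show "(?c - a) * markov_bound \<mu> u a ^ card J \<le> overbid_regret l \<mu> u m ?c"
      using overbid_regret_ge[of a ?c] J by simp
  next
    assume "\<mu> \<le> ?c"
    then show "(v - ?c) * (1 - ((?c - \<mu>) / (?c - l)) ^ card J) \<le> overbid_regret l \<mu> u m ?c"
      using underbid_regret_eq_high[of ?c v] c balance J by simp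
  next
    fix x assume x: "?c < \<mu>" "?c \<le> x" "x \<le> \<mu>"
    then show "(v - x) * markov_bound \<mu> u x ^ card J \<le> overbid_regret l \<mu> u m ?c"
      using underbid_regret_low_ge[of ?c x v] underbid_regret_eq_low[of ?c v] c balance J by simp
  qed
qed

lemma max_loss_ge_minimax_regret:
  assumes J: "finite J" "card J = m" and v: "l \<le> v" "v \<le> V" and b: "0 \<le> b"
  shows "ereal (overbid_regret l \<mu> u m (minimax_bid l V m \<mu> v)) \<le> max_loss J l \<mu> u v b"
proof -
  let ?c = "minimax_bid l V m \<mu> v"
  have c: "l \<le> ?c" "?c \<le> v" using minimax_bid_root[OF v] by auto
  consider "b < ?c" | "l < b" "?c \<le> b" | "b \<le> l" "?c = l"
    using c by fastforce
  then show ?thesis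
  proof cases
    case 1
    have "underbid_regret l \<mu> u m v ?c \<le> underbid_regret l \<mu> u m v (max b l)"
      using 1 c by (intro underbid_regret_antimono) auto
    moreover have "ereal (underbid_regret l \<mu> u m v (max b l)) \<le> max_loss J l \<mu> u v b"
      using 1 b minimax_bid_le_u[OF v] by (intro max_loss_ge_underbid_regret[OF J]) auto
    ultimately show ?thesis using minimax_bid_balances[OF v] by (metis ereal_less_eq(3) order_trans)
  next
    case 2
    have "overbid_regret l \<mu> u m ?c \<le> overbid_regret l \<mu> u m b"
      using 2 overbid_regret_strict_mono[of ?c b] c by (cases "?c = b") auto
    then show ?thesis
      using max_loss_ge_overbid_regret[OF J 2(1), of v] by (metis ereal_less_eq(3) order_trans)
  next
    case 3
    then show ?thesis
      using max_loss_nonneg[OF lower_nonneg _ _ b] lower_less_mean mean_less_u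
      by (simp add: zero_ereal_def)
  qed
qed

lemma minimax_loss_bid_minimax_bid:
  assumes "finite J" "card J = m" "l \<le> v" "v \<le> V"
  shows "minimax_loss_bid J l \<mu> u v (minimax_bid l V m \<mu> v)"
  unfolding minimax_loss_bid_def
  using minimax_bid_root[OF assms(3,4)] lower_nonneg max_loss_minimax_bid_le[OF assms]
    max_loss_ge_minimax_regret[OF assms]
  by (meson order_trans)

lemma minimax_bid_gap_bound:
  assumes v: "l \<le> v" "v \<le> V" and far: "\<mu> - l < v - \<mu>"
  shows "\<mu> < minimax_bid l V m \<mu> v \<and> (v - minimax_bid l V m \<mu> v) * (\<mu> - l) \<le> (minimax_bid l V m \<mu> v - l)\<^sup>2"
proof -
  let ?c = "minimax_bid l V m \<mu> v"
  have c: "l \<le> ?c" "?c \<le> v" using minimax_bid_root[OF v] by auto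
  have regret_le: "underbid_regret l \<mu> u m v ?c \<le> ?c - l"
    using minimax_bid_balances[OF v] overbid_regret_le_excess[OF c(1)] by simp
  have above_mean: "\<mu> < ?c"
  proof (rule ccontr)
    assume "\<not> \<mu> < ?c"
    then have "v - \<mu> \<le> underbid_regret l \<mu> u m v ?c"
      using underbid_regret_low_ge[of ?c \<mu> v] underbid_regret_eq_low[of ?c v] c by simp
    then show False using regret_le \<open>\<not> \<mu> < ?c\<close> far by simp
  qed
  have "((?c - \<mu>) / (?c - l)) ^ m \<le> ((?c - \<mu>) / (?c - l)) ^ 1"
    using win_ratio_bounds[of ?c] above_mean lower_less_mean opponents_pos
    by (intro power_decreasing) (auto simp: divide_simps)
  then have "(\<mu> - l) / (?c - l) \<le> 1 - ((?c - \<mu>) / (?c - l)) ^ m"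
    using above_mean lower_less_mean by (simp add: field_simps)
  then have "(v - ?c) * ((\<mu> - l) / (?c - l)) \<le> (v - ?c) * (1 - ((?c - \<mu>) / (?c - l)) ^ m)"
    using c by (intro mult_left_mono) auto
  also have "\<dots> \<le> ?c - l"
    using underbid_regret_eq_high[of ?c v] above_mean c regret_le by simp
  finally have "(v - ?c) * (\<mu> - l) \<le> (?c - l) * (?c - l)"
    using above_mean lower_less_mean by (simp add: field_simps)
  then show ?thesis using above_mean by (simp add: power2_eq_square)
qed

end

context
  fixes F :: "real measure"
  assumes prob_space_F: "prob_space F" and sets_F: "sets F = sets borel"
begin

interpretation prob_space F by (rule prob_space_F)

lemma AE_in_supp: "AE x in F. x \<in> supp F"
proof -
  \<comment> \<open>the complement of the support is covered by the null intervals with rational endpoints\<close>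
  define I where "I = {pq :: rat \<times> rat. measure F {real_of_rat (fst pq) <..< real_of_rat (snd pq)} = 0}"
  define N where "N = (\<Union>pq\<in>I. {real_of_rat (fst pq) <..< real_of_rat (snd pq)})"
  have "N \<in> null_sets F" unfolding N_def
  proof (rule null_sets_UN')
    fix pq assume "pq \<in> I"
    then show "{real_of_rat (fst pq) <..< real_of_rat (snd pq)} \<in> null_sets F"
      using sets_F by (auto simp: I_def null_sets_def emeasure_eq_measure)
  qed (rule countable_subset[of _ UNIV]; simp)
  moreover have "{x \<in> space F. x \<notin> supp F} \<subseteq> N"
  proof clarify
    fix x assume "x \<notin> supp F"
    then obtain e where e: "e > 0" "measure F {x - e <..< x + e} = 0"
      unfolding supp_def by (auto simp: zero_less_measure_iff)
    obtain r1 where r1: "r1 \<in> \<rat>" "x - e < r1" "r1 < x" using Rats_dense_in_real[of "x - e" x] e by auto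
    obtain r2 where r2: "r2 \<in> \<rat>" "x < r2" "r2 < x + e" using Rats_dense_in_real[of x "x + e"] e by auto
    obtain p q where pq: "r1 = real_of_rat p" "r2 = real_of_rat q" using r1 r2 Rats_cases by metis
    have "measure F {r1 <..< r2} \<le> measure F {x - e <..< x + e}"
      using r1 r2 sets_F by (intro finite_measure_mono) auto
    then have "measure F {r1 <..< r2} = 0" using e measure_nonneg[of F "{r1<..<r2}"] by linarith
    then have "(p, q) \<in> I" unfolding I_def using pq by simp
    then show "x \<in> N" unfolding N_def using r1 r2 pq by (auto intro!: bexI[of _ "(p, q)"])
  qed
  ultimately show ?thesis by (rule AE_I')
qed

lemma closed_supp: "closed (supp F)"
  unfolding closed_def open_dist
proof (intro ballI)
  fix x assume "x \<in> - supp F"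
  then obtain e where e: "e > 0" "measure F {x - e <..< x + e} = 0"
    unfolding supp_def by (auto simp: zero_less_measure_iff)
  show "\<exists>d>0. \<forall>y. dist y x < d \<longrightarrow> y \<in> - supp F"
  proof (intro exI[of _ "e/2"] conjI allI impI)
    fix y assume "dist y x < e/2"
    then have "\<bar>y - x\<bar> < e/2" by (simp add: dist_real_def)
    then have "x - e \<le> y - e/2" "y + e/2 \<le> x + e" by linarith+
    then have "{y - e/2 <..< y + e/2} \<subseteq> {x - e <..< x + e}" by auto
    then have "measure F {y - e/2 <..< y + e/2} \<le> measure F {x - e <..< x + e}"
      using sets_F by (intro finite_measure_mono) auto
    then show "y \<in> - supp F" unfolding supp_def using e by (auto intro!: exI[of _ "e/2"])
  qed (use e in simp)
qed

lemma supp_nonempty: "supp F \<noteq> {}"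
proof
  assume "supp F = {}"
  then have "AE x in F. False" using AE_in_supp by simp
  then show False by (simp add: AE_False)
qed

lemma supp_interval_bounds:
  assumes "supp F \<subseteq> {a..b}"
  shows "Inf (supp F) \<in> supp F" "Sup (supp F) \<in> supp F" "supp F \<subseteq> {Inf (supp F)..Sup (supp F)}"
proof -
  have "bdd_below (supp F)" "bdd_above (supp F)"
    using assms by (meson bdd_below_Icc bdd_above_Icc bdd_below_mono bdd_above_mono)+
  then show "Inf (supp F) \<in> supp F" "Sup (supp F) \<in> supp F" "supp F \<subseteq> {Inf (supp F)..Sup (supp F)}"
    using closed_contains_Inf closed_contains_Sup supp_nonempty closed_supp
    by (auto intro: cInf_lower cSup_upper)
qed

end

lemma quadratic_gap_bound:
  fixes p t d :: real
  assumes p: "0 < p" "p \<le> 1" and t: "0 < t" and d: "0 < d"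
    and gap: "(t - d) * (p\<^sup>2 * t / 4) \<le> d\<^sup>2"
  shows "p\<^sup>2 * t / 4 < p * d"
proof (cases "t/2 \<le> d")
  case True
  have "p\<^sup>2 * t / 4 < p * (t / 2)"
    using p t mult_strict_left_mono[of "p * t / 4" "t / 2" p] by (simp add: power2_eq_square)
  also have "\<dots> \<le> p * d" using True p by simp
  finally show ?thesis .
next
  case False
  show ?thesis
  proof (rule ccontr)
    assume "\<not> ?thesis"
    then have "d \<le> p * t / 4" using p by (simp add: power2_eq_square mult.assoc)
    then have "d\<^sup>2 \<le> (p * t / 4)\<^sup>2" using d by (intro power_mono) auto
    moreover have "(t / 2) * (p\<^sup>2 * t / 4) \<le> (t - d) * (p\<^sup>2 * t / 4)"
      using False p t by (intro mult_right_mono) auto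
    ultimately have "p\<^sup>2 * t\<^sup>2 / 8 \<le> p\<^sup>2 * t\<^sup>2 / 16"
      using gap by (simp add: power2_eq_square field_simps)
    then show False using p t by simp
  qed
qed

locale nondegenerate_values =
  fixes F :: "real measure" and l V :: real and m :: nat
  assumes prob_space_F: "prob_space F" and sets_F: "sets F = sets borel"
    and lower_nonneg: "0 \<le> l" and lower_less_top: "l < V"
    and lower_in_supp: "l \<in> supp F" and top_in_supp: "V \<in> supp F"
    and supp_bounds: "supp F \<subseteq> {l..V}"
    and opponents_pos: "0 < m"
begin

interpretation prob_space F by (rule prob_space_F)

text \<open>Values are clipped to [l, V] so that bids are monotone and bounded on all reals.\<close>

definition clip :: "real \<Rightarrow> real" where
  "clip v = max l (min v V)"

definition bid :: "real \<Rightarrow> real \<Rightarrow> real" where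
  "bid \<mu> v = minimax_bid l V m \<mu> (clip v)"

lemma clip_bounds: "l \<le> clip v" "clip v \<le> V"
  unfolding clip_def using lower_less_top by auto

lemma mono_clip: "mono clip"
  unfolding clip_def mono_def by auto

lemma clip_supp: "v \<in> supp F \<Longrightarrow> clip v = v"
  unfolding clip_def using supp_bounds by auto

lemma minimax_biddingI: "l < \<mu> \<Longrightarrow> \<mu> < V \<Longrightarrow> minimax_bidding l V m \<mu>"
  using lower_nonneg opponents_pos by unfold_locales

lemma mono_bid: "l < \<mu> \<Longrightarrow> \<mu> < V \<Longrightarrow> mono (bid \<mu>)"
  unfolding mono_def bid_def
  using minimax_bidding.minimax_bid_mono[OF minimax_biddingI] clip_bounds mono_clip
  by (meson monoD)

lemma bid_bounds: "l < \<mu> \<Longrightarrow> \<mu> < V \<Longrightarrow> l \<le> bid \<mu> v \<and> bid \<mu> v \<le> clip v"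
  unfolding bid_def using minimax_bidding.minimax_bid_root[OF minimax_biddingI] clip_bounds by auto

lemma bid_measurable: "l < \<mu> \<Longrightarrow> \<mu> < V \<Longrightarrow> bid \<mu> \<in> borel_measurable borel"
  using borel_measurable_mono[OF mono_bid] by blast

lemma integrable_bid:
  assumes "l < \<mu>" "\<mu> < V"
  shows "integrable F (bid \<mu>)"
proof (rule integrable_const_bound[where B=V])
  have "norm (bid \<mu> v) \<le> V" for v
    using bid_bounds[OF assms, of v] clip_bounds[of v] lower_nonneg by simp
  then show "AE v in F. norm (bid \<mu> v) \<le> V" by simp
  show "bid \<mu> \<in> borel_measurable F"
    using bid_measurable[OF assms] sets_F measurable_cong_sets by blast
qed

lemma integrable_clip: "integrable F clip"
proof (rule integrable_const_bound[where B=V])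
  have "norm (clip v) \<le> V" for v
    using clip_bounds[of v] lower_nonneg by simp
  then show "AE v in F. norm (clip v) \<le> V" by simp
  show "clip \<in> borel_measurable F"
    using borel_measurable_mono[OF mono_clip] sets_F measurable_cong_sets by blast
qed

lemma continuous_on_mean_bid:
  assumes "l < \<mu>1" "\<mu>2 < V"
  shows "continuous_on {\<mu>1..\<mu>2} (\<lambda>\<mu>. \<integral>v. bid \<mu> v \<partial>F)"
proof (rule continuous_on_sequentiallyI)
  fix \<mu>s \<mu> assume \<mu>s: "\<forall>n. \<mu>s n \<in> {\<mu>1..\<mu>2}" and \<mu>: "\<mu> \<in> {\<mu>1..\<mu>2}" and lim: "\<mu>s \<longlonglongrightarrow> \<mu>"
  have \<mu>s_bounds: "l < \<mu>s n" "\<mu>s n < V" for n using \<mu>s[rule_format, of n] assms by auto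
  have \<mu>_bounds: "l < \<mu>" "\<mu> < V" using \<mu> assms by auto
  show "(\<lambda>n. \<integral>v. bid (\<mu>s n) v \<partial>F) \<longlonglongrightarrow> (\<integral>v. bid \<mu> v \<partial>F)"
  proof (rule integral_dominated_convergence[where w="\<lambda>_. V"])
    show "bid \<mu> \<in> borel_measurable F" "\<And>n. bid (\<mu>s n) \<in> borel_measurable F"
      using bid_measurable \<mu>_bounds \<mu>s_bounds sets_F measurable_cong_sets by blast+
    have "(\<lambda>n. bid (\<mu>s n) v) \<longlonglongrightarrow> bid \<mu> v" for v
      unfolding bid_def
      using continuous_on_minimax_bid[OF lower_nonneg assms opponents_pos clip_bounds[of v]]
      by (rule continuous_on_tendsto_compose[OF _ lim \<mu>]) (use \<mu>s in auto)
    then show "AE v in F. (\<lambda>n. bid (\<mu>s n) v) \<longlonglongrightarrow> bid \<mu> v" by simp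
    have "norm (bid (\<mu>s n) v) \<le> V" for n v
      using bid_bounds[OF \<mu>s_bounds, of n v] clip_bounds[of v] lower_nonneg by simp
    then show "\<And>n. AE v in F. norm (bid (\<mu>s n) v) \<le> V" by simp
  qed simp
qed

lemma integral_clip_bounds: "l \<le> (\<integral>v. clip v \<partial>F) \<and> (\<integral>v. clip v \<partial>F) < V"
proof -
  \<comment> \<open>the values near l have positive mass and are clipped well below V\<close>
  define t where "t = (V - l) / 2"
  define A where "A = {l - t <..< l + t}"
  have t: "0 < t" using lower_less_top by (simp add: t_def)
  have A: "A \<in> events" "0 < prob A"
    using lower_in_supp t sets_F unfolding supp_def A_def by auto
  have "(\<integral>v. t * indicator A v \<partial>F) \<le> (\<integral>v. V - clip v \<partial>F)"
  proof (rule integral_mono)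
    fix v
    show "t * indicator A v \<le> V - clip v"
    proof (cases "v \<in> A")
      case True
      then have "clip v \<le> l + t" unfolding A_def clip_def using t by auto
      then have "t \<le> V - clip v" unfolding t_def by argo
      then show ?thesis using True by simp
    qed (use clip_bounds[of v] in simp)
  qed (use integrable_clip A in \<open>auto simp: emeasure_eq_measure\<close>)
  then have "t * prob A \<le> V - (\<integral>v. clip v \<partial>F)"
    using integrable_clip A by (simp add: prob_space)
  moreover have "l \<le> (\<integral>v. clip v \<partial>F)"
    using integral_mono[OF integrable_const integrable_clip, of l] clip_bounds by (simp add: prob_space)
  ultimately show ?thesis using t A by (smt (verit) mult_pos_pos)
qed

lemma mean_bid_le_integral_clip: "l < \<mu> \<Longrightarrow> \<mu> < V \<Longrightarrow> (\<integral>v. bid \<mu> v \<partial>F) \<le> (\<integral>v. clip v \<partial>F)"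
  using bid_bounds by (intro integral_mono integrable_bid integrable_clip) auto

lemma mean_bid_ge_tail_mass:
  assumes \<mu>: "l < \<mu>" "\<mu> < V" and w: "l \<le> w" "w \<le> V"
  shows "l + (minimax_bid l V m \<mu> w - l) * prob {w<..} \<le> (\<integral>v. bid \<mu> v \<partial>F)"
proof -
  let ?c = "minimax_bid l V m \<mu> w"
  have "(\<integral>v. l + (?c - l) * indicator {w<..} v \<partial>F) \<le> (\<integral>v. bid \<mu> v \<partial>F)"
  proof (rule integral_mono)
    fix v
    show "l + (?c - l) * indicator {w<..} v \<le> bid \<mu> v"
    proof (cases "w < v")
      case True
      then have "w \<le> clip v" using w unfolding clip_def by auto
      then have "?c \<le> bid \<mu> v"
        unfolding bid_def using minimax_bidding.minimax_bid_mono[OF minimax_biddingI[OF \<mu>]] w clip_bounds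
        by simp
      then show ?thesis using True by simp
    qed (use bid_bounds[OF \<mu>, of v] in simp)
  qed (use integrable_bid[OF \<mu>] sets_F in \<open>auto simp: emeasure_eq_measure\<close>)
  moreover have "(\<integral>v. l + (?c - l) * indicator {w<..} v \<partial>F) = l + (?c - l) * prob {w<..}"
    using sets_F by (subst Bochner_Integration.integral_add) (auto simp: prob_space emeasure_eq_measure)
  ultimately show ?thesis by simp
qed

lemma exists_mean_bid_ge_mean: "\<exists>\<mu>. l < \<mu> \<and> \<mu> \<le> (l + V) / 2 \<and> \<mu> \<le> (\<integral>v. bid \<mu> v \<partial>F)"
proof -
  \<comment> \<open>for \<mu> = l + p^2 t / 4, the values above w = l + t (mass p) bid a fixed distance above l\<close>
  define t where "t = (V - l) / 2"
  define w where "w = l + t"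
  define p where "p = prob {w<..}"
  define \<mu> where "\<mu> = l + p\<^sup>2 * t / 4"
  have t: "0 < t" using lower_less_top by (simp add: t_def)
  have "0 < prob {V - t <..< V + t}" using top_in_supp t unfolding supp_def by auto
  moreover have "prob {V - t <..< V + t} \<le> p"
  proof -
    have "w = V - t" unfolding w_def t_def by argo
    then show ?thesis unfolding p_def using sets_F by (intro finite_measure_mono) auto
  qed
  ultimately have p: "0 < p" "p \<le> 1" unfolding p_def by auto
  have "p\<^sup>2 \<le> 1" using p by (simp add: power_le_one)
  then have \<mu>_bounds: "l < \<mu>" "\<mu> \<le> l + t / 4" unfolding \<mu>_def using p t by auto
  have \<mu>_less_top: "\<mu> < V" using \<mu>_bounds t unfolding t_def by argo
  interpret M: minimax_bidding l V m \<mu> by (rule minimax_biddingI) (use \<mu>_bounds \<mu>_less_top in auto)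
  let ?c = "minimax_bid l V m \<mu> w"
  have w: "l \<le> w" "w \<le> V" using lower_less_top unfolding w_def t_def by (simp_all add: field_simps)
  have "\<mu> < ?c \<and> (w - ?c) * (\<mu> - l) \<le> (?c - l)\<^sup>2"
    by (rule M.minimax_bid_gap_bound[OF w]) (use \<mu>_bounds t in \<open>simp add: w_def\<close>)
  moreover have "w - ?c = t - (?c - l)" "\<mu> - l = p\<^sup>2 * t / 4" by (simp_all add: w_def \<mu>_def)
  ultimately have "p\<^sup>2 * t / 4 < p * (?c - l)"
    using \<mu>_bounds by (intro quadratic_gap_bound[OF p t]) auto
  then have "\<mu> \<le> l + (?c - l) * p" unfolding \<mu>_def by (simp add: mult.commute)
  also have "\<dots> \<le> (\<integral>v. bid \<mu> v \<partial>F)"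
    unfolding p_def by (rule mean_bid_ge_tail_mass[OF _ \<mu>_less_top w]) (use \<mu>_bounds in simp)
  finally have "\<mu> \<le> (\<integral>v. bid \<mu> v \<partial>F)" .
  moreover have "\<mu> \<le> (l + V) / 2" using \<mu>_bounds t unfolding t_def by argo
  ultimately show ?thesis using \<mu>_bounds by auto
qed

lemma exists_fixed_mean: "\<exists>\<mu>. l < \<mu> \<and> \<mu> < V \<and> (\<integral>v. bid \<mu> v \<partial>F) = \<mu>"
proof -
  obtain \<mu>1 where \<mu>1: "l < \<mu>1" "\<mu>1 \<le> (l + V) / 2" "\<mu>1 \<le> (\<integral>v. bid \<mu>1 v \<partial>F)"
    using exists_mean_bid_ge_mean by blast
  define \<mu>2 where "\<mu>2 = ((\<integral>v. clip v \<partial>F) + V) / 2"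
  have \<mu>2: "\<mu>1 \<le> \<mu>2" "\<mu>2 < V" "(\<integral>v. clip v \<partial>F) < \<mu>2"
    using integral_clip_bounds \<mu>1 unfolding \<mu>2_def by auto
  have "(\<integral>v. bid \<mu>2 v \<partial>F) \<le> \<mu>2"
    using mean_bid_le_integral_clip[of \<mu>2] \<mu>1 \<mu>2 by simp
  moreover have "continuous_on {\<mu>1..\<mu>2} (\<lambda>\<mu>. (\<integral>v. bid \<mu> v \<partial>F) - \<mu>)"
    using continuous_on_mean_bid[OF \<mu>1(1) \<mu>2(2)] by (intro continuous_intros)
  ultimately obtain \<mu> where \<mu>: "\<mu>1 \<le> \<mu>" "\<mu> \<le> \<mu>2" "(\<integral>v. bid \<mu> v \<partial>F) - \<mu> = 0"
    using IVT2'[of "\<lambda>\<mu>. (\<integral>v. bid \<mu> v \<partial>F) - \<mu>" \<mu>2 0 \<mu>1] \<mu>1 \<mu>2 by auto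
  then show ?thesis using \<mu>1 \<mu>2 by (intro exI[of _ \<mu>]) auto
qed

lemma bid_supp: "l < \<mu> \<Longrightarrow> \<mu> < V \<Longrightarrow> v \<in> supp F \<Longrightarrow> bid \<mu> v = minimax_bid l V m \<mu> v"
  unfolding bid_def using clip_supp by simp

lemma moment_equilibrium_bid:
  assumes n: "2 \<le> n" "m = n - 1" and \<mu>: "l < \<mu>" "\<mu> < V" "(\<integral>v. bid \<mu> v \<partial>F) = \<mu>"
  shows "moment_equilibrium n F (\<lambda>i. bid \<mu>) (\<lambda>i. l) (\<lambda>i. \<mu>) (\<lambda>i. top_bid l V m \<mu>)
    \<and> strict_mono_on (supp F) (bid \<mu>)"
proof -
  interpret M: minimax_bidding l V m \<mu> by (rule minimax_biddingI[OF \<mu>(1,2)])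
  have opponents: "finite ({0..<n} - {i})" "card ({0..<n} - {i}) = m" if "i < n" for i
    using that n by (auto simp: card_Diff_singleton)
  have supp_values: "l \<le> v" "v \<le> V" if "v \<in> supp F" for v
    using that supp_bounds by auto
  have "Inf (bid \<mu> ` supp F) = l"
  proof (rule cInf_eq_minimum)
    show "l \<in> bid \<mu> ` supp F"
      using bid_supp[OF \<mu>(1,2) lower_in_supp] M.minimax_bid_at_lower lower_in_supp by (metis image_eqI)
  qed (use bid_bounds[OF \<mu>(1,2)] in auto)
  moreover have "Sup (bid \<mu> ` supp F) = top_bid l V m \<mu>"
  proof (rule cSup_eq_maximum)
    show "top_bid l V m \<mu> \<in> bid \<mu> ` supp F"
      using bid_supp[OF \<mu>(1,2) top_in_supp] M.minimax_bid_at_top top_in_supp by (metis image_eqI)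
  qed (use bid_supp[OF \<mu>(1,2)] M.minimax_bid_le_u supp_values in auto)
  moreover have "minimax_loss_bid ({0..<n} - {i}) l \<mu> (top_bid l V m \<mu>) v (bid \<mu> v)"
    if "i < n" "v \<in> supp F" for i v
    using M.minimax_loss_bid_minimax_bid[OF opponents[OF that(1)] supp_values[OF that(2)]]
      bid_supp[OF \<mu>(1,2) that(2)] by simp
  moreover have "strict_mono_on (supp F) (bid \<mu>)"
    using bid_supp[OF \<mu>(1,2)] M.minimax_bid_strict_mono supp_values by (intro strict_mono_onI) auto
  ultimately show ?thesis
    unfolding moment_equilibrium_def
    using bid_measurable[OF \<mu>(1,2)] bid_bounds[OF \<mu>(1,2)] lower_nonneg integrable_bid[OF \<mu>(1,2)] \<mu>(3)
    by (auto intro: order_trans)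
qed

end

lemma max_loss_point_beliefs_le:
  assumes J: "finite J" "J \<noteq> {}" and l: "0 \<le> l" and b: "0 \<le> b"
  shows "max_loss J l l l l l \<le> max_loss J l l l l b"
proof -
  have "loss J B l l \<le> ereal 0" if B: "B \<in> belief_set J l l l" for B
  proof (rule loss_leI)
    interpret moment_beliefs J B l l l by (rule moment_beliefsI[OF J(1) B])
    fix b' :: real
    show "exp_payoff J B l b' \<le> exp_payoff J B l l + 0"
      using win_prob_nonneg[of b'] win_prob_below_lower_bound[OF J(2), of b']
      unfolding exp_payoff_eq_win_prob by (cases "l \<le> b'") (auto simp: mult_nonpos_nonneg)
  qed
  then have "max_loss J l l l l l \<le> 0"
    unfolding max_loss_def zero_ereal_def by (rule SUP_least)
  then show ?thesis using max_loss_nonneg[OF l order_refl order_refl b, of J l] by simp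
qed

lemma degenerate_moment_equilibrium:
  assumes n: "2 \<le> n" and "prob_space F" and l: "0 \<le> l" and supp: "supp F = {l}"
  shows "moment_equilibrium n F (\<lambda>i _. l) (\<lambda>i. l) (\<lambda>i. l) (\<lambda>i. l) \<and> strict_mono_on (supp F) (\<lambda>_. l)"
proof -
  interpret prob_space F by fact
  have "{0..<n} - {i} \<noteq> {}" if "i < n" for i
  proof -
    have "(if i = 0 then 1 else 0) \<in> {0..<n} - {i}" using n by auto
    then show ?thesis by blast
  qed
  then have "minimax_loss_bid ({0..<n} - {i}) l l l l l" if "i < n" for i
    unfolding minimax_loss_bid_def using max_loss_point_beliefs_le that l by auto
  then show ?thesis
    unfolding moment_equilibrium_def supp using l by (auto simp: prob_space strict_mono_on_def)
qed

theorem theorem2: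
  fixes n :: nat and F :: "real measure" and vlo vhi :: real
  assumes "n \<ge> 2"
    and "prob_space F" and "sets F = sets borel"
    and "0 \<le> vlo" and "vlo \<le> vhi"
    and "supp F \<subseteq> {vlo..vhi}"
  shows "\<exists>(l :: real) (\<mu> :: real) (u :: real) (\<beta> :: real \<Rightarrow> real).
           moment_equilibrium n F (\<lambda>i. \<beta>) (\<lambda>i. l) (\<lambda>i. \<mu>) (\<lambda>i. u) \<and>
           strict_mono_on (supp F) \<beta>"
proof -
  define l V where "l = Inf (supp F)" and "V = Sup (supp F)"
  have supp: "l \<in> supp F" "V \<in> supp F" "supp F \<subseteq> {l..V}"
    using supp_interval_bounds[OF assms(2,3,6)] unfolding l_def V_def by auto
  have l: "0 \<le> l" using supp(1) assms(4,6) by auto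
  show ?thesis
  proof (cases "l < V")
    case True
    have "nondegenerate_values F l V (n - 1)"
      unfolding nondegenerate_values_def using assms(1-3) l True supp by simp
    then interpret nondegenerate_values F l V "n - 1" .
    obtain \<mu> where \<mu>: "l < \<mu>" "\<mu> < V" "(\<integral>v. bid \<mu> v \<partial>F) = \<mu>"
      using exists_fixed_mean by blast
    show ?thesis using moment_equilibrium_bid[OF assms(1) refl \<mu>] by blast
  next
    case False
    then have "supp F = {l}" using supp by auto
    show ?thesis using degenerate_moment_equilibrium[OF assms(1,2) l \<open>supp F = {l}\<close>] by blast
  qed
qed

end
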